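(* Let $s,t\ge1$ and $D\ge3$ be integers and let $\ell=2\lceil\log s/\log(D-1)\rceil+3$. Let $\mathcal G=\{G_1,\dots,G_t\}$ be an $s$-joined graph family on $n$ vertices. Let $\mathcal H$ be a $[t]$-edge-colored subdivision of $K_D$ in which every path between two branch vertices has length at least $\ell$, and with $\Delta^{mon}(\mathcal H)\le D$. If $|V(\mathcal H)|\le n-6sD$, then $\mathcal G$ contains $\mathcal H$.
   Context: A graph family $\mathcal G=\{G_1,\dots,G_t\}$ is a collection of $t$ simple graphs on a common finite vertex set $V$, $n=|V|$. It is $s$-joined if for all $X\subseteq V\times[t]$ and $Y\subseteq V$ with $|X|\ge s$ and $|Y|\ge s$ there exist $(v,i)\in X$ and $y\in Y$ with $vy\in E(G_i)$. A $[t]$-edge-colored graph $\mathcal H$ is a simple graph each of whose edges is assigned a color in $[t]$; $\deg_{H_i}(h)$ denotes the number of edges of color $i$ at $h$, and $\Delta^{mon}(\mathcal H)=\max_{i\in[t]}\max_{h\in V(\mathcal H)}\deg_{H_i}(h)$. $\mathcal G$ contains $\mathcal H$ if there is an injective map $\phi:V(\mathcal H)\to V$ with $\phi(u)\phi(v)\in E(G_i)$ for every edge $uv$ of color $i$. A subdivision of $K_m$ is obtained from $K_m$ by replacing each edge by a path, these paths internally vertex-disjoint and disjoint from the original vertices except at their ends; the original vertices are the branch vertices. *)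

theory Defs
  imports Complex_Main
begin

definition graph_family :: "'v set \<Rightarrow> nat \<Rightarrow> (nat \<Rightarrow> 'v set set) \<Rightarrow> bool" where
  "graph_family V t E \<longleftrightarrow> finite V \<and>
     (\<forall>i\<in>{1..t}. E i \<subseteq> {e. e \<subseteq> V \<and> card e = 2})"

definition s_joined :: "nat \<Rightarrow> 'v set \<Rightarrow> nat \<Rightarrow> (nat \<Rightarrow> 'v set set) \<Rightarrow> bool" where
  "s_joined s V t E \<longleftrightarrow>
     (\<forall>X Y. X \<subseteq> V \<times> {1..t} \<and> Y \<subseteq> V \<and> card X \<ge> s \<and> card Y \<ge> s \<longrightarrow>
        (\<exists>(v,i)\<in>X. \<exists>y\<in>Y. {v, y} \<in> E i))"

definition edge_colored_graph :: "nat \<Rightarrow> 'h set \<Rightarrow> 'h set set \<Rightarrow> ('h set \<Rightarrow> nat) \<Rightarrow> bool" where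
  "edge_colored_graph t VH EH c \<longleftrightarrow> finite VH \<and>
     EH \<subseteq> {e. e \<subseteq> VH \<and> card e = 2} \<and> (\<forall>e\<in>EH. c e \<in> {1..t})"

definition max_mon_degree_le :: "nat \<Rightarrow> 'h set \<Rightarrow> 'h set set \<Rightarrow> ('h set \<Rightarrow> nat) \<Rightarrow> nat \<Rightarrow> bool" where
  "max_mon_degree_le t VH EH c D \<longleftrightarrow>
     (\<forall>i\<in>{1..t}. \<forall>h\<in>VH. card {e\<in>EH. h \<in> e \<and> c e = i} \<le> D)"

definition path_edges :: "'h list \<Rightarrow> 'h set set" where
  "path_edges xs = {{xs ! k, xs ! Suc k} | k. Suc k < length xs}"

text \<open>(VH, EH) is a subdivision of K_D in which every path between two branch
  vertices has length (number of edges) at least l. B is the set of branch vertices,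
  P a b the path from a to b.\<close>
definition subdivision_KD :: "nat \<Rightarrow> nat \<Rightarrow> 'h set \<Rightarrow> 'h set set \<Rightarrow> bool" where
  "subdivision_KD D l VH EH \<longleftrightarrow>
     (\<exists>B P. B \<subseteq> VH \<and> card B = D \<and>
        (\<forall>a\<in>B. \<forall>b\<in>B. a \<noteq> b \<longrightarrow>
            P b a = rev (P a b) \<and> P a b \<noteq> [] \<and> hd (P a b) = a \<and> last (P a b) = b \<and>
            distinct (P a b) \<and> length (P a b) \<ge> l + 1 \<and>
            (set (P a b) - {a, b}) \<inter> B = {}) \<and>
        (\<forall>a\<in>B. \<forall>b\<in>B. \<forall>a'\<in>B. \<forall>b'\<in>B. a \<noteq> b \<and> a' \<noteq> b' \<and> {a, b} \<noteq> {a', b'} \<longrightarrow>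
            (set (P a b) - {a, b}) \<inter> (set (P a' b') - {a', b'}) = {}) \<and>
        VH = B \<union> (\<Union>a\<in>B. \<Union>b\<in>B - {a}. set (P a b)) \<and>
        EH = (\<Union>a\<in>B. \<Union>b\<in>B - {a}. path_edges (P a b)))"

definition family_contains :: "'v set \<Rightarrow> (nat \<Rightarrow> 'v set set) \<Rightarrow> 'h set \<Rightarrow> 'h set set \<Rightarrow> ('h set \<Rightarrow> nat) \<Rightarrow> bool" where
  "family_contains V E VH EH c \<longleftrightarrow>
     (\<exists>\<phi>. inj_on \<phi> VH \<and> \<phi> ` VH \<subseteq> V \<and> (\<forall>e\<in>EH. \<phi> ` e \<in> E (c e)))"

end

(*
  The paths of the subdivision are embedded one after another while keeping the partial embedding
  extendable. Besides the used vertices S, a state records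
  a forest of tree triples (u, j, y): vertex y hangs below u via an edge of colour j, and every
  vertex-colour pair (u, j) outside a small forbidden set F may still receive D - 1 children. The
  state is extendable if every set U of at most 2s pairs sees at least as many unused vertices as
  its total remaining demand. Since the surplus of this inequality is submodular and, by
  s-joinedness, any s pairs see all but fewer than s vertices, a new leaf can always be attached
  outside the neighbourhood of the maximal set without slack; removing vertices that are closed
  under taking children also preserves extendability.

  To join the images of two branch vertices by a path with prescribed colours, a broom is grown
  from each end: a path followed by a complete (D - 1)-ary tree of depth d, where (D - 1)^d >= s.
  By s-joinedness two leaves of the two trees are adjacent in the colour of the middle edge, and
  all vertices off the resulting path are pruned. The forbidden set F consists of fewer than s
  vertices that expand badly and is chosen once at the start, so that the initial state with the
  branch vertices is extendable; the size bound on V pays for all the temporary trees.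
*)

theory Submission
  imports Defs
begin

section \<open>Coloured walks and chains of tree triples\<close>

definition chain_triples :: "'v list \<Rightarrow> nat list \<Rightarrow> ('v \<times> nat \<times> 'v) set" where
  "chain_triples xs cs = {(xs ! k, cs ! k, xs ! Suc k) | k. k < length cs}"

definition colored_walk :: "(nat \<Rightarrow> 'v set set) \<Rightarrow> 'v list \<Rightarrow> nat list \<Rightarrow> bool" where
  "colored_walk E xs cs \<longleftrightarrow>
     length xs = Suc (length cs) \<and> (\<forall>k < length cs. {xs ! k, xs ! Suc k} \<in> E (cs ! k))"

lemma chain_triples_Cons:
  "chain_triples (x # y # ys) (c # cs) = insert (x, c, y) (chain_triples (y # ys) cs)"
proof -
  have "{k. k < Suc (length cs)} = insert 0 (Suc ` {k. k < length cs})"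
    by (auto simp: image_iff less_Suc_eq_0_disj)
  then show ?thesis unfolding chain_triples_def by (auto simp: setcompr_eq_image image_image)
qed

lemma chain_triples_append:
  assumes "length xs = Suc (length cs)" "length ys = Suc (length ds)" "hd ys = last xs"
  shows "chain_triples (xs @ tl ys) (cs @ ds) = chain_triples xs cs \<union> chain_triples ys ds"
proof -
  obtain ys' where ys: "ys = last xs # ys'" using assms(2,3) by (cases ys) auto
  have left: "(xs @ tl ys) ! k = xs ! k" "(xs @ tl ys) ! Suc k = xs ! Suc k" if "k < length cs" for k
    using that assms(1) by (auto simp: nth_append)
  have last: "last xs = xs ! length cs" using assms(1) by (metis diff_Suc_1 last_conv_nth list.size(3) nat.distinct(1))
  have right: "(xs @ tl ys) ! (length cs + k) = ys ! k" "(xs @ tl ys) ! Suc (length cs + k) = ys ! Suc k"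
    if "k < length ds" for k
    using that assms(1) by (auto simp: ys nth_append last nth_Cons')
  show ?thesis
  proof (intro equalityI subsetI)
    fix x assume "x \<in> chain_triples (xs @ tl ys) (cs @ ds)"
    then obtain k where k: "k < length cs + length ds"
      "x = ((xs @ tl ys) ! k, (cs @ ds) ! k, (xs @ tl ys) ! Suc k)"
      by (auto simp: chain_triples_def)
    show "x \<in> chain_triples xs cs \<union> chain_triples ys ds"
    proof (cases "k < length cs")
      case True
      then have "x = (xs ! k, cs ! k, xs ! Suc k)" using k(2) left by (simp add: nth_append)
      then show ?thesis using True unfolding chain_triples_def by blast
    next
      case False
      define i where "i = k - length cs"
      have i: "k = length cs + i" "i < length ds" using False k(1) by (auto simp: i_def)
      then have "x = (ys ! i, ds ! i, ys ! Suc i)" using k(2) right[of i] by (simp add: nth_append)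
      then show ?thesis using i(2) unfolding chain_triples_def by blast
    qed
  next
    fix x assume "x \<in> chain_triples xs cs \<union> chain_triples ys ds"
    then show "x \<in> chain_triples (xs @ tl ys) (cs @ ds)"
    proof
      assume "x \<in> chain_triples xs cs"
      then obtain k where "k < length cs" "x = (xs ! k, cs ! k, xs ! Suc k)"
        by (auto simp: chain_triples_def)
      then have "k < length (cs @ ds)"
        "x = ((xs @ tl ys) ! k, (cs @ ds) ! k, (xs @ tl ys) ! Suc k)"
        using left by (auto simp: nth_append)
      then show ?thesis unfolding chain_triples_def by blast
    next
      assume "x \<in> chain_triples ys ds"
      then obtain k where "k < length ds" "x = (ys ! k, ds ! k, ys ! Suc k)"
        by (auto simp: chain_triples_def)
      then have "length cs + k < length (cs @ ds)" "x = ((xs @ tl ys) ! (length cs + k),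
          (cs @ ds) ! (length cs + k), (xs @ tl ys) ! Suc (length cs + k))"
        using right[of k] by (auto simp: nth_append)
      then show ?thesis unfolding chain_triples_def by blast
    qed
  qed
qed

lemma chain_triples_parent:
  assumes "length xs = Suc (length cs)" "z \<in> set (tl xs)"
  shows "\<exists>p\<in>set xs. \<exists>j. (p, j, z) \<in> chain_triples xs cs"
proof -
  obtain k where k: "k < length (tl xs)" "z = tl xs ! k" using assms(2) by (metis in_set_conv_nth)
  then have "(xs ! k, cs ! k, z) \<in> chain_triples xs cs" "xs ! k \<in> set xs"
    using assms(1) by (auto simp: chain_triples_def nth_tl)
  then show ?thesis by blast
qed

lemma chain_triples_source:
  assumes "(u, j, y) \<in> chain_triples xs cs" "length xs = Suc (length cs)" "distinct xs"
  shows "y \<in> set (tl xs) \<and> (u \<in> set (tl xs) \<or> (u = hd xs \<and> j = hd cs \<and> y = xs ! 1))"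
proof -
  obtain k where k: "k < length cs" "u = xs ! k" "j = cs ! k" "y = xs ! Suc k"
    using assms(1) by (auto simp: chain_triples_def)
  have xs: "xs = hd xs # tl xs" using assms(2) by (cases xs) auto
  have "y = tl xs ! k" using k(1,4) assms(2) by (simp add: nth_tl)
  then have "y \<in> set (tl xs)" using k(1) assms(2) by simp
  moreover have "u \<in> set (tl xs)" if "k \<noteq> 0"
    using that k(1,2) assms(2) by (subst (asm) xs) (auto simp: nth_Cons')
  moreover have "u = hd xs \<and> j = hd cs \<and> y = xs ! 1" if "k = 0"
    using that k assms(2) by (cases cs; cases xs) auto
  ultimately show ?thesis by blast
qed

lemma chain_triples_last:
  assumes "length xs = Suc (length cs)" "distinct xs"
  shows "(last xs, j, y) \<notin> chain_triples xs cs"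
proof
  assume "(last xs, j, y) \<in> chain_triples xs cs"
  moreover have "last xs = xs ! length cs"
    using assms(1) by (metis diff_Suc_1 last_conv_nth list.size(3) nat.distinct(1))
  ultimately obtain k where "k < length cs" "xs ! k = xs ! length cs"
    by (auto simp: chain_triples_def)
  then show False using assms by (simp add: nth_eq_iff_index_eq)
qed

lemma last_in_hd_tl: "xs \<noteq> [] \<Longrightarrow> last xs \<in> insert (hd xs) (set (tl xs))"
  by (cases xs) auto

lemma set_hd_tl: "xs \<noteq> [] \<Longrightarrow> set xs = insert (hd xs) (set (tl xs))"
  by (cases xs) auto

lemma split_around_middle:
  assumes "2 * d + 3 \<le> length cs"
  obtains hx tx cm cy where "cs = (hx @ tx) @ cm # rev cy" "hx \<noteq> []" "length tx = d" "length cy = Suc d"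
proof -
  define p where "p = length cs - 2 * d - 2"
  have "p + d < length cs" "p \<ge> 1" using assms by (auto simp: p_def)
  then have "cs = (take p cs @ take d (drop p cs)) @ cs ! (p + d) # rev (rev (drop (Suc (p + d)) cs))"
    by (simp add: take_add[symmetric] id_take_nth_drop[symmetric])
  moreover have "take p cs \<noteq> []" "length (take d (drop p cs)) = d"
    "length (rev (drop (Suc (p + d)) cs)) = Suc d"
    using \<open>p \<ge> 1\<close> assms by (auto simp: p_def)
  ultimately show ?thesis by (rule that)
qed

lemma last_append_tl:
  "xs \<noteq> [] \<Longrightarrow> ys \<noteq> [] \<Longrightarrow> hd ys = last xs \<Longrightarrow> last (xs @ tl ys) = last ys"
  by (cases ys) auto

lemma graft_lists:
  assumes "h \<noteq> []" "\<And>l. l \<in> Ls \<Longrightarrow> l \<noteq> [] \<and> hd l = last h"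
  shows "card ((\<lambda>l. h @ tl l) ` Ls) = card Ls" "inj_on last Ls \<Longrightarrow> inj_on last ((\<lambda>l. h @ tl l) ` Ls)"
proof -
  have "inj_on (\<lambda>l. h @ tl l) Ls"
    using assms(2) by (intro inj_onI) (metis list.collapse same_append_eq)
  then show "card ((\<lambda>l. h @ tl l) ` Ls) = card Ls" by (rule card_image)
  have "last (h @ tl l) = last l" if "l \<in> Ls" for l
    using assms(1) assms(2)[OF that] by (intro last_append_tl) auto
  then show "inj_on last Ls \<Longrightarrow> inj_on last ((\<lambda>l. h @ tl l) ` Ls)" by (auto simp: inj_on_def)
qed

lemma card_Un_path:
  assumes "finite A" "distinct Q" "set Q \<inter> A = {x, y}" "x \<noteq> y"
  shows "card (A \<union> set Q) = card A + (length Q - 2)"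
proof -
  have "A \<union> set Q = A \<union> (set Q - {x, y})" "A \<inter> (set Q - {x, y}) = {}" using assms(3) by auto
  moreover have "card (set Q - {x, y}) = length Q - 2"
    using assms(2-4) by (subst card_Diff_subset) (auto simp: distinct_card)
  ultimately show ?thesis using assms(1) by (simp add: card_Un_disjoint)
qed

lemma extend_lists_by_disjoint_sets:
  assumes fin: "finite Ls" and inj: "inj_on last Ls"
    and K: "\<And>l. l \<in> Ls \<Longrightarrow> finite (K (last l)) \<and> card (K (last l)) = k"
    and disj: "\<And>l l'. l \<in> Ls \<Longrightarrow> l' \<in> Ls \<Longrightarrow> last l \<noteq> last l' \<Longrightarrow> K (last l) \<inter> K (last l') = {}"
  defines "Ls' \<equiv> (\<lambda>(l, y). l @ [y]) ` (SIGMA l:Ls. K (last l))"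
  shows "finite Ls'" "card Ls' = k * card Ls" "inj_on last Ls'"
proof -
  have "inj_on (\<lambda>(l, y). l @ [y]) (SIGMA l:Ls. K (last l))" by (auto simp: inj_on_def)
  moreover have "card (SIGMA l:Ls. K (last l)) = k * card Ls" using fin K by simp
  ultimately show "card Ls' = k * card Ls" by (simp add: Ls'_def card_image)
  show "finite Ls'" using fin K by (simp add: Ls'_def)
  show "inj_on last Ls'"
  proof (rule inj_onI)
    fix a b assume ab: "a \<in> Ls'" "b \<in> Ls'" "last a = last b"
    obtain la ya lb yb where "a = la @ [ya]" "la \<in> Ls" "ya \<in> K (last la)"
      "b = lb @ [yb]" "lb \<in> Ls" "yb \<in> K (last lb)"
      using ab(1,2) by (auto simp: Ls'_def)
    then show "a = b" using ab(3) disj inj_onD[OF inj] by auto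
  qed
qed

lemma colored_walk_rev:
  assumes "colored_walk E xs cs"
  shows "colored_walk E (rev xs) (rev cs)"
  unfolding colored_walk_def
proof (intro conjI allI impI)
  show "length (rev xs) = Suc (length (rev cs))" using assms by (simp add: colored_walk_def)
  fix k assume k: "k < length (rev cs)"
  define k' where "k' = length cs - Suc k"
  have "k' < length cs" "rev xs ! k = xs ! Suc k'" "rev xs ! Suc k = xs ! k'" "rev cs ! k = cs ! k'"
    using k assms by (auto simp: colored_walk_def rev_nth k'_def Suc_diff_Suc)
  then show "{rev xs ! k, rev xs ! Suc k} \<in> E (rev cs ! k)"
    using assms by (auto simp: colored_walk_def insert_commute)
qed

lemma colored_walk_join:
  assumes "colored_walk E xs cs" "colored_walk E ys ds" "{last xs, hd ys} \<in> E c"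
  shows "colored_walk E (xs @ ys) (cs @ c # ds)"
  unfolding colored_walk_def
proof (intro conjI allI impI)
  have len: "length xs = Suc (length cs)" "length ys = Suc (length ds)"
    using assms(1,2) by (simp_all add: colored_walk_def)
  then show "length (xs @ ys) = Suc (length (cs @ c # ds))" by simp
  fix k assume k: "k < length (cs @ c # ds)"
  consider "k < length cs" | "k = length cs" | "k > length cs" by linarith
  then show "{(xs @ ys) ! k, (xs @ ys) ! Suc k} \<in> E ((cs @ c # ds) ! k)"
  proof cases
    case 1 then show ?thesis using assms(1) len by (simp add: colored_walk_def nth_append)
  next
    case 2
    have "xs \<noteq> []" "ys \<noteq> []" using len by auto
    then have "last xs = xs ! length cs" "hd ys = ys ! 0"
      using len by (simp_all add: last_conv_nth hd_conv_nth)
    then show ?thesis using 2 assms(3) len by (simp add: nth_append)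
  next
    case 3
    define i where "i = k - Suc (length cs)"
    have i: "k = Suc (length cs + i)" "i < length ds" using 3 k by (auto simp: i_def)
    then show ?thesis using assms(2) len by (simp add: colored_walk_def nth_append)
  qed
qed

section \<open>Extendable states\<close>

lemma card_le_card_Diff_plus:
  assumes "finite A" "finite B"
  shows "card A \<le> card (A - B) + card B"
proof -
  have "card A \<le> card ((A - B) \<union> B)" by (rule card_mono) (use assms in auto)
  also have "\<dots> \<le> card (A - B) + card B" by (rule card_Un_le)
  finally show ?thesis .
qed

definition out_edges :: "('v \<times> nat \<times> 'v) set \<Rightarrow> 'v \<Rightarrow> (nat \<times> 'v) set" where
  "out_edges C u = {(j, y). (u, j, y) \<in> C}"

lemma card_out_edges_le:
  assumes fin: "finite (out_edges C u)" and x: "x \<noteq> x'"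
    and new: "{(v, j, y). (v, j, y) \<in> C' \<and> v = u} \<subseteq> insert (x, j0, z) (insert (x', j1, z') C)"
  shows "card (out_edges C' u) \<le> card (out_edges C u) + (if u = x \<or> u = x' then 1 else 0)"
proof -
  define N where "N = (if u = x then {(j0, z)} else if u = x' then {(j1, z')} else {})"
  have "out_edges C' u \<subseteq> N \<union> out_edges C u" using new x by (auto simp: out_edges_def N_def)
  then have "card (out_edges C' u) \<le> card (N \<union> out_edges C u)"
    using fin by (intro card_mono) (auto simp: N_def)
  also have "\<dots> \<le> card N + card (out_edges C u)" by (rule card_Un_le)
  finally show ?thesis by (auto simp: N_def split: if_splits)
qed

locale joined_family =
  fixes V :: "'v set" and t :: nat and E :: "nat \<Rightarrow> 'v set set" and s D :: nat
  assumes family: "graph_family V t E"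
    and joined: "s_joined s V t E"
    and D_ge_3: "D \<ge> 3"
    and s_pos: "s \<ge> 1"
begin

lemma finite_V: "finite V"
  using family by (simp add: graph_family_def)

lemma edge_endpoints:
  assumes "i \<in> {1..t}" "{v, y} \<in> E i"
  shows "v \<in> V" "y \<in> V" "v \<noteq> y"
proof -
  have "{v, y} \<subseteq> V" "card {v, y} = 2"
    using family assms unfolding graph_family_def by blast+
  then show "v \<in> V" "y \<in> V" "v \<noteq> y" by (auto simp: card_insert_if split: if_splits)
qed

definition nbr :: "'v \<Rightarrow> nat \<Rightarrow> 'v set" where
  "nbr v i = {y. {v, y} \<in> E i}"

definition nbrs :: "('v \<times> nat) set \<Rightarrow> 'v set" where
  "nbrs U = (\<Union>p\<in>U. nbr (fst p) (snd p))"

lemma nbr_subset_V: "i \<in> {1..t} \<Longrightarrow> nbr v i \<subseteq> V"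
  using edge_endpoints by (auto simp: nbr_def)

lemma nbrs_subset_V: "U \<subseteq> V \<times> {1..t} \<Longrightarrow> nbrs U \<subseteq> V"
  using nbr_subset_V by (fastforce simp: nbrs_def)

lemma finite_nbrs: "U \<subseteq> V \<times> {1..t} \<Longrightarrow> finite (nbrs U)"
  using finite_subset[OF nbrs_subset_V finite_V] .

lemma finite_pairs: "U \<subseteq> V \<times> {1..t} \<Longrightarrow> finite U"
  using finite_V by (meson finite_SigmaI finite_atLeastAtMost finite_subset)

lemma nbrs_Un: "nbrs (A \<union> B) = nbrs A \<union> nbrs B"
  by (auto simp: nbrs_def)

lemma nbrs_mono: "A \<subseteq> B \<Longrightarrow> nbrs A \<subseteq> nbrs B"
  by (auto simp: nbrs_def)

lemma nbrs_insert: "nbrs (insert p A) = nbr (fst p) (snd p) \<union> nbrs A"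
  by (auto simp: nbrs_def)

lemma card_non_nbrs_less:
  assumes "U \<subseteq> V \<times> {1..t}" "card U \<ge> s"
  shows "card (V - nbrs U) < s"
proof (rule ccontr)
  assume "\<not> card (V - nbrs U) < s"
  then have "\<exists>(v,i)\<in>U. \<exists>y\<in>V - nbrs U. {v, y} \<in> E i"
    using joined assms unfolding s_joined_def by (meson Diff_subset not_le)
  then show False by (force simp: nbrs_def nbr_def)
qed

lemma exists_joined_pair:
  assumes "f ` X \<subseteq> V" "f ` Y \<subseteq> V" "inj_on f X" "inj_on f Y" "s \<le> card X" "s \<le> card Y"
    and "i \<in> {1..t}"
  obtains x y where "x \<in> X" "y \<in> Y" "{f x, f y} \<in> E i"
proof -
  have "card (f ` X \<times> {i}) \<ge> s" "card (f ` Y) \<ge> s"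
    using assms(3-6) by (simp_all add: card_image card_cartesian_product)
  then have "\<exists>(v, j)\<in>f ` X \<times> {i}. \<exists>w\<in>f ` Y. {v, w} \<in> E j"
    using assms(1,2,7) by (intro joined[unfolded s_joined_def, rule_format]) auto
  then show ?thesis using that by auto
qed

definition children :: "('v \<times> nat \<times> 'v) set \<Rightarrow> 'v \<Rightarrow> nat \<Rightarrow> 'v set" where
  "children C u j = {y. (u, j, y) \<in> C}"

definition demand :: "'v set \<Rightarrow> ('v \<times> nat \<times> 'v) set \<Rightarrow> 'v \<times> nat \<Rightarrow> int" where
  "demand F C p =
     (if fst p \<in> F then 0 else int (D - 1) - int (card (children C (fst p) (snd p))))"

definition surplus :: "'v set \<Rightarrow> 'v set \<Rightarrow> ('v \<times> nat \<times> 'v) set \<Rightarrow> ('v \<times> nat) set \<Rightarrow> int" where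
  "surplus F S C U = int (card (nbrs U - S)) - (\<Sum>p\<in>U. demand F C p)"

definition expanding :: "'v set \<Rightarrow> 'v set \<Rightarrow> ('v \<times> nat \<times> 'v) set \<Rightarrow> bool" where
  "expanding F S C \<longleftrightarrow> (\<forall>U \<subseteq> V \<times> {1..t}. card U \<le> 2 * s \<longrightarrow> 0 \<le> surplus F S C U)"

text \<open>A triple (u, j, y) of C records that y hangs below u via an edge of colour j.\<close>

definition extendable :: "'v set \<Rightarrow> 'v set \<Rightarrow> ('v \<times> nat \<times> 'v) set \<Rightarrow> bool" where
  "extendable F S C \<longleftrightarrow> F \<subseteq> S \<and> S \<subseteq> V \<and>
     (\<forall>u j y. (u, j, y) \<in> C \<longrightarrow> u \<in> S \<and> y \<in> S \<and> j \<in> {1..t} \<and> {u, y} \<in> E j) \<and>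
     (\<forall>u j y u' j'. (u, j, y) \<in> C \<longrightarrow> (u', j', y) \<in> C \<longrightarrow> u = u' \<and> j = j') \<and>
     expanding F S C"

lemma demand_le: "demand F C p \<le> int (D - 1)"
  by (simp add: demand_def)

lemma sum_demand_le: "finite U \<Longrightarrow> (\<Sum>p\<in>U. demand F C p) \<le> int (D - 1) * int (card U)"
  using sum_mono[of U "demand F C" "\<lambda>_. int (D - 1)", OF demand_le] by (simp add: mult.commute)

lemma demand_cong:
  "children C' u j = children C u j \<Longrightarrow> demand F C' (u, j) = demand F C (u, j)"
  by (simp add: demand_def)

context
  fixes F S C assumes ext: "extendable F S C"
begin

lemma extendable_tree_edge:
  "(u, j, y) \<in> C \<Longrightarrow> u \<in> S \<and> y \<in> S \<and> j \<in> {1..t} \<and> {u, y} \<in> E j"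
  using ext unfolding extendable_def by blast

lemma extendable_unique_parent:
  "(u, j, y) \<in> C \<Longrightarrow> (u', j', y) \<in> C \<Longrightarrow> u = u' \<and> j = j'"
  using ext unfolding extendable_def by blast

lemma extendable_subset_V: "S \<subseteq> V"
  using ext unfolding extendable_def by blast

lemma extendable_forbidden_subset: "F \<subseteq> S"
  using ext unfolding extendable_def by blast

lemma extendable_expanding: "expanding F S C"
  using ext unfolding extendable_def by blast

lemma extendable_finite: "finite S"
  using finite_subset[OF extendable_subset_V finite_V] .

lemma extendable_finite_children: "finite (children C u j)"
proof -
  have "children C u j \<subseteq> S" using extendable_tree_edge by (auto simp: children_def)
  then show ?thesis using extendable_finite finite_subset by blast
qed

lemma extendable_children_outside:
  "u \<notin> S \<Longrightarrow> children C u j = {}"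
  using extendable_tree_edge by (auto simp: children_def)

lemma extendable_surplus_nonneg:
  "U \<subseteq> V \<times> {1..t} \<Longrightarrow> card U \<le> 2 * s \<Longrightarrow> 0 \<le> surplus F S C U"
  using extendable_expanding by (simp add: expanding_def)

end

lemma surplus_submodular:
  assumes "A \<subseteq> V \<times> {1..t}" "B \<subseteq> V \<times> {1..t}"
  shows "surplus F S C (A \<union> B) + surplus F S C (A \<inter> B) \<le> surplus F S C A + surplus F S C B"
proof -
  have fin: "finite A" "finite B" "finite (nbrs A - S)" "finite (nbrs B - S)"
    using assms finite_pairs finite_nbrs by auto
  have un: "nbrs (A \<union> B) - S = (nbrs A - S) \<union> (nbrs B - S)"
    by (auto simp: nbrs_Un)
  have "card (nbrs (A \<inter> B) - S) \<le> card ((nbrs A - S) \<inter> (nbrs B - S))"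
    using fin nbrs_mono[of "A \<inter> B" A] nbrs_mono[of "A \<inter> B" B]
    by (intro card_mono) auto
  moreover have "card (nbrs A - S) + card (nbrs B - S) =
      card ((nbrs A - S) \<union> (nbrs B - S)) + card ((nbrs A - S) \<inter> (nbrs B - S))"
    using fin by (intro card_Un_Int)
  moreover have "(\<Sum>p\<in>A \<union> B. demand F C p) + (\<Sum>p\<in>A \<inter> B. demand F C p) =
      (\<Sum>p\<in>A. demand F C p) + (\<Sum>p\<in>B. demand F C p)"
    using fin by (intro sum.union_inter)
  ultimately show ?thesis unfolding surplus_def un by linarith
qed

definition tight :: "'v set \<Rightarrow> 'v set \<Rightarrow> ('v \<times> nat \<times> 'v) set \<Rightarrow> ('v \<times> nat) set \<Rightarrow> bool" where
  "tight F S C U \<longleftrightarrow> U \<subseteq> V \<times> {1..t} \<and> card U \<le> 2 * s \<and> surplus F S C U \<le> 0"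

lemma tight_card_less:
  assumes "tight F S C U" "finite S" "card S + (2 * D - 1) * s \<le> card V"
  shows "card U < s"
proof (rule ccontr)
  assume "\<not> card U < s"
  with assms(1) have U: "U \<subseteq> V \<times> {1..t}" "card U \<ge> s" "card U \<le> 2 * s" "surplus F S C U \<le> 0"
    by (auto simp: tight_def)
  have "card V \<le> card ((V - nbrs U) \<union> S \<union> (nbrs U - S))"
    by (rule card_mono) (use finite_V assms(2) finite_nbrs[OF U(1)] in auto)
  also have "\<dots> \<le> card (V - nbrs U) + card S + card (nbrs U - S)"
    using card_Un_le[of "(V - nbrs U) \<union> S" "nbrs U - S"] card_Un_le[of "V - nbrs U" S] by linarith
  finally have "card V \<le> card (V - nbrs U) + card S + card (nbrs U - S)" .
  moreover have "card (V - nbrs U) < s" by (rule card_non_nbrs_less[OF U(1,2)])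
  moreover have "int (card (nbrs U - S)) \<le> int ((D - 1) * (2 * s))"
    using U(3,4) sum_demand_le[OF finite_pairs[OF U(1)], of F C]
      mult_left_mono[of "int (card U)" "int (2 * s)" "int (D - 1)"]
    by (simp add: surplus_def)
  then have "card (nbrs U - S) \<le> (D - 1) * (2 * s)" by linarith
  moreover have "(2 * D - 1) * s = (D - 1) * (2 * s) + s"
  proof -
    have "2 * D - 1 = 2 * (D - 1) + 1" using D_ge_3 by linarith
    then show ?thesis by (simp add: algebra_simps)
  qed
  ultimately show False using assms(3) by linarith
qed

lemma tight_Un:
  assumes ext: "expanding F S C" and S: "finite S" "card S + (2 * D - 1) * s \<le> card V"
    and A: "tight F S C A" and B: "tight F S C B"
  shows "tight F S C (A \<union> B)"
proof -
  have sub: "A \<subseteq> V \<times> {1..t}" "B \<subseteq> V \<times> {1..t}" using A B by (auto simp: tight_def)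
  have card_Un: "card (A \<union> B) \<le> 2 * s"
    using card_Un_le[of A B] tight_card_less[OF A S] tight_card_less[OF B S] by linarith
  have "card (A \<inter> B) \<le> 2 * s"
    using card_mono[OF finite_pairs[OF sub(1)], of "A \<inter> B"] A by (simp add: tight_def)
  moreover have "A \<inter> B \<subseteq> V \<times> {1..t}" using sub by blast
  ultimately have "0 \<le> surplus F S C (A \<inter> B)"
    using ext unfolding expanding_def by blast
  moreover have "surplus F S C (A \<union> B) + surplus F S C (A \<inter> B) \<le> surplus F S C A + surplus F S C B"
    by (rule surplus_submodular[OF sub])
  moreover have "surplus F S C A \<le> 0" "surplus F S C B \<le> 0" using A B by (simp_all add: tight_def)
  ultimately show ?thesis using sub card_Un by (simp add: tight_def)
qed

text \<open>The union of all tight sets avoiding a given pair is again tight.\<close>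

lemma maximal_tight_set:
  assumes ext: "expanding F S C" and S: "finite S" "card S + (2 * D - 1) * s \<le> card V"
  obtains Z where "tight F S C Z" "p \<notin> Z" "\<And>U. tight F S C U \<Longrightarrow> p \<notin> U \<Longrightarrow> U \<subseteq> Z"
proof -
  let ?T = "{U. tight F S C U \<and> p \<notin> U}"
  have "?T \<subseteq> Pow (V \<times> {1..t})" by (auto simp: tight_def)
  then have fin: "finite ?T" using finite_V by (meson finite_Pow_iff finite_SigmaI finite_atLeastAtMost finite_subset)
  have "tight F S C (\<Union>\<T>) \<and> p \<notin> \<Union>\<T>" if "finite \<T>" "\<T> \<subseteq> ?T" for \<T>
    using that
  proof (induction rule: finite_induct)
    case empty then show ?case by (simp add: tight_def surplus_def nbrs_def)
  next
    case (insert U \<T>) then show ?case using tight_Un[OF ext S] by auto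
  qed
  from this[OF fin] show ?thesis by (intro that[of "\<Union>?T"]) auto
qed

lemma demand_attach:
  assumes "v \<notin> F" "y \<notin> children C v i" "finite (children C v i)"
  shows "demand F (insert (v, i, y) C) p = demand F C p - (if p = (v, i) then 1 else 0)"
proof -
  have "children (insert (v, i, y) C) u j = (if (u, j) = (v, i) then insert y (children C v i)
    else children C u j)" for u j by (auto simp: children_def)
  then show ?thesis using assms by (cases p) (auto simp: demand_def)
qed

text \<open>A new leaf y of (v, i) only hurts the pairs U with y in their neighbourhood. If U avoids
  (v, i) and has no slack, it lies inside the maximal tight set Z, so choosing y outside the
  neighbourhood of Z keeps every set expanding.\<close>

lemma expanding_attach:
  assumes ext: "extendable F S C" and y: "y \<notin> S" and v: "v \<notin> F"
    and Z: "\<And>U. tight F S C U \<Longrightarrow> (v, i) \<notin> U \<Longrightarrow> U \<subseteq> Z" "y \<notin> nbrs Z"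
  shows "expanding F (insert y S) (insert (v, i, y) C)"
  unfolding expanding_def
proof (intro allI impI)
  fix U assume U: "U \<subseteq> V \<times> {1..t}" "card U \<le> 2 * s"
  have "y \<notin> children C v i" using extendable_tree_edge[OF ext] y by (auto simp: children_def)
  then have "(\<Sum>p\<in>U. demand F (insert (v, i, y) C) p) =
      (\<Sum>p\<in>U. demand F C p) - (\<Sum>p\<in>U. if p = (v, i) then 1 else 0)"
    by (simp add: demand_attach[OF v _ extendable_finite_children[OF ext]] sum_subtractf)
  also have "(\<Sum>p\<in>U. if p = (v, i) then 1 else 0::int) = (if (v, i) \<in> U then 1 else 0)"
    using finite_pairs[OF U(1)] by (simp add: sum.delta)
  finally have dem: "(\<Sum>p\<in>U. demand F (insert (v, i, y) C) p) =
      (\<Sum>p\<in>U. demand F C p) - (if (v, i) \<in> U then 1 else 0)" .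
  have "int (card (nbrs U - S)) = int (card (nbrs U - insert y S)) + (if y \<in> nbrs U then 1 else 0)"
  proof (cases "y \<in> nbrs U")
    case True
    then have "nbrs U - S = insert y (nbrs U - insert y S)" using y by blast
    then have "card (nbrs U - S) = Suc (card (nbrs U - insert y S))"
      using finite_nbrs[OF U(1)] by (metis card_insert_disjoint finite_Diff insertI1 DiffD2)
    then show ?thesis using True by simp
  next
    case False
    then have "nbrs U - insert y S = nbrs U - S" by blast
    then show ?thesis using False by simp
  qed
  moreover have "0 \<le> surplus F S C U" by (rule extendable_surplus_nonneg[OF ext U])
  moreover have "y \<notin> nbrs U" if "surplus F S C U \<le> 0" "(v, i) \<notin> U"
  proof -
    have "tight F S C U" using U that(1) by (simp add: tight_def)
    then show ?thesis using Z nbrs_mono that(2) by blast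
  qed
  ultimately show "0 \<le> surplus F (insert y S) (insert (v, i, y) C) U"
    unfolding surplus_def dem by (smt (verit))
qed

lemma extendable_add_leaf:
  assumes ext: "extendable F S C" and v: "v \<in> S" and i: "i \<in> {1..t}"
    and dem: "demand F C (v, i) \<ge> 1" and budget: "card S + (2 * D - 1) * s \<le> card V"
  obtains y where "y \<in> nbr v i" "y \<notin> S" "extendable F (insert y S) (insert (v, i, y) C)"
proof -
  note fin = extendable_finite[OF ext]
  obtain Z where Z: "tight F S C Z" "(v, i) \<notin> Z" "\<And>U. tight F S C U \<Longrightarrow> (v, i) \<notin> U \<Longrightarrow> U \<subseteq> Z"
    using maximal_tight_set[OF extendable_expanding[OF ext] fin budget] by blast
  have ZV: "Z \<subseteq> V \<times> {1..t}" and finZ: "finite Z" using Z(1) finite_pairs by (auto simp: tight_def)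
  have vi: "insert (v, i) Z \<subseteq> V \<times> {1..t}" using ZV extendable_subset_V[OF ext] v i by auto
  have "card (insert (v, i) Z) \<le> 2 * s"
    using tight_card_less[OF Z(1) fin budget] finZ Z(2) by simp
  then have "0 \<le> surplus F S C (insert (v, i) Z)" by (rule extendable_surplus_nonneg[OF ext vi])
  with Z(1,2) dem finZ have "card (nbrs Z - S) < card (nbrs (insert (v, i) Z) - S)"
    by (simp add: surplus_def tight_def)
  then have "\<not> nbrs (insert (v, i) Z) - S \<subseteq> nbrs Z - S"
    using card_mono[OF finite_Diff[OF finite_nbrs[OF ZV]]] by (meson leD)
  then obtain y where y: "y \<in> nbr v i" "y \<notin> S" "y \<notin> nbrs Z" by (auto simp: nbrs_insert)
  have v_notin: "v \<notin> F" using dem by (auto simp: demand_def)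
  have "expanding F (insert y S) (insert (v, i, y) C)"
    by (rule expanding_attach[OF ext y(2) v_notin Z(3) y(3)])
  moreover have "F \<subseteq> insert y S" "insert y S \<subseteq> V"
    using ext nbr_subset_V[OF i] y(1) by (auto simp: extendable_def)
  moreover have "u \<in> insert y S \<and> x \<in> insert y S \<and> j \<in> {1..t} \<and> {u, x} \<in> E j"
    if "(u, j, x) \<in> insert (v, i, y) C" for u j x
    using that extendable_tree_edge[OF ext] v i y(1) by (auto simp: nbr_def)
  moreover have "u = u' \<and> j = j'"
    if "(u, j, x) \<in> insert (v, i, y) C" "(u', j', x) \<in> insert (v, i, y) C" for u j x u' j'
    using that extendable_tree_edge[OF ext] extendable_unique_parent[OF ext] y(2) by blast
  ultimately have "extendable F (insert y S) (insert (v, i, y) C)"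
    unfolding extendable_def by blast
  with y show ?thesis using that by blast
qed

text \<open>Pruning a set R closed under taking children frees every vertex of R that a pair could
  see, while the demand of the pairs grows only by their children in R; since children have
  unique parents, these are distinct vertices of the neighbourhood inside R.\<close>

lemma expanding_prune:
  assumes ext: "extendable F S C" and R: "R \<subseteq> S"
  shows "expanding F (S - R) {(u, j, y). (u, j, y) \<in> C \<and> y \<notin> R}"
  unfolding expanding_def
proof (intro allI impI)
  let ?C = "{(u, j, y). (u, j, y) \<in> C \<and> y \<notin> R}"
  let ?lost = "\<lambda>p. children C (fst p) (snd p) \<inter> R"
  fix U assume U: "U \<subseteq> V \<times> {1..t}" "card U \<le> 2 * s"
  have fin: "finite U" "finite (nbrs U)" using U finite_pairs finite_nbrs by auto
  have lost_fin: "finite (?lost p)" for p using extendable_finite_children[OF ext] by blast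
  have "demand F ?C p \<le> demand F C p + int (card (?lost p))" for p
  proof -
    have split: "children C (fst p) (snd p) = children ?C (fst p) (snd p) \<union> ?lost p"
      and disj: "children ?C (fst p) (snd p) \<inter> ?lost p = {}"
      by (auto simp: children_def)
    have fin': "finite (children ?C (fst p) (snd p))"
      using extendable_finite_children[OF ext] by (rule finite_subset[rotated]) (auto simp: children_def)
    have "card (children C (fst p) (snd p)) = card (children ?C (fst p) (snd p) \<union> ?lost p)"
      using split by (rule arg_cong)
    also have "\<dots> = card (children ?C (fst p) (snd p)) + card (?lost p)"
      by (rule card_Un_disjoint[OF fin' lost_fin disj])
    finally show ?thesis by (simp add: demand_def)
  qed
  then have "(\<Sum>p\<in>U. demand F ?C p) \<le> (\<Sum>p\<in>U. demand F C p + int (card (?lost p)))"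
    by (intro sum_mono)
  also have "\<dots> = (\<Sum>p\<in>U. demand F C p) + int (\<Sum>p\<in>U. card (?lost p))"
    by (simp add: sum.distrib)
  also have "(\<Sum>p\<in>U. card (?lost p)) = card (\<Union>p\<in>U. ?lost p)"
  proof (rule card_UN_disjoint[symmetric, OF fin(1)])
    show "\<forall>p\<in>U. finite (?lost p)" using lost_fin by blast
    show "\<forall>p\<in>U. \<forall>q\<in>U. p \<noteq> q \<longrightarrow> ?lost p \<inter> ?lost q = {}"
      using extendable_unique_parent[OF ext] by (fastforce simp: children_def prod_eq_iff)
  qed
  also have "card (\<Union>p\<in>U. ?lost p) \<le> card (nbrs U \<inter> R)"
    using fin extendable_tree_edge[OF ext]
    by (intro card_mono) (auto simp: children_def nbrs_def nbr_def)
  finally have "(\<Sum>p\<in>U. demand F ?C p) \<le> (\<Sum>p\<in>U. demand F C p) + int (card (nbrs U \<inter> R))"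
    by simp
  moreover have "card (nbrs U - (S - R)) = card (nbrs U - S) + card (nbrs U \<inter> R)"
  proof -
    have "nbrs U - (S - R) = (nbrs U - S) \<union> (nbrs U \<inter> R)" using R by blast
    moreover have "card ((nbrs U - S) \<union> (nbrs U \<inter> R)) = card (nbrs U - S) + card (nbrs U \<inter> R)"
      using fin R by (intro card_Un_disjoint) auto
    ultimately show ?thesis by simp
  qed
  moreover have "0 \<le> surplus F S C U" by (rule extendable_surplus_nonneg[OF ext U])
  ultimately show "0 \<le> surplus F (S - R) ?C U" by (simp add: surplus_def)
qed

lemma extendable_prune:
  assumes ext: "extendable F S C" and R: "R \<subseteq> S" "R \<inter> F = {}"
    and closed: "\<And>u j y. (u, j, y) \<in> C \<Longrightarrow> u \<in> R \<Longrightarrow> y \<in> R"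
  shows "extendable F (S - R) {(u, j, y). (u, j, y) \<in> C \<and> y \<notin> R}"
proof -
  have "u \<in> S - R \<and> y \<in> S - R \<and> j \<in> {1..t} \<and> {u, y} \<in> E j"
    if "(u, j, y) \<in> C" "y \<notin> R" for u j y
    using that closed extendable_tree_edge[OF ext] by blast
  then show ?thesis
    using ext R expanding_prune[OF ext R(1)] extendable_unique_parent[OF ext]
    unfolding extendable_def by auto
qed

definition poorly_expanding :: "('v \<times> nat) set \<Rightarrow> bool" where
  "poorly_expanding W \<longleftrightarrow> W \<subseteq> V \<times> {1..t} \<and> card W < s \<and>
     card (nbrs W - fst ` W) \<le> (2 * D - 1) * card W"

text \<open>A poorly expanding set with at least s elements would see all but fewer than s vertices,
  which is impossible for fewer than 2s pairs when V is large.\<close>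

lemma poorly_expanding_Un:
  assumes big: "card V \<ge> (4 * D + 1) * s + D" and Z: "poorly_expanding Z"
    and U: "U \<subseteq> (V - fst ` Z) \<times> {1..t}" "card U < s"
    and poor: "card (nbrs U - fst ` Z) \<le> (2 * D - 1) * card U"
  shows "poorly_expanding (Z \<union> U)"
proof -
  let ?W = "Z \<union> U"
  have ZV: "Z \<subseteq> V \<times> {1..t}" and cZ: "card Z < s" using Z by (auto simp: poorly_expanding_def)
  have UV: "U \<subseteq> V \<times> {1..t}" using U(1) by auto
  then have WV: "?W \<subseteq> V \<times> {1..t}" using ZV by simp
  have cW: "card ?W = card Z + card U"
    using U(1) finite_pairs[OF ZV] finite_pairs[OF UV] by (intro card_Un_disjoint) force+
  have sub: "nbrs ?W - fst ` ?W \<subseteq> (nbrs Z - fst ` Z) \<union> (nbrs U - fst ` Z)"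
    by (auto simp: nbrs_Un)
  have "card (nbrs ?W - fst ` ?W) \<le> card ((nbrs Z - fst ` Z) \<union> (nbrs U - fst ` Z))"
    using finite_nbrs[OF ZV] finite_nbrs[OF UV] by (intro card_mono[OF _ sub]) auto
  then have "card (nbrs ?W - fst ` ?W) \<le> card (nbrs Z - fst ` Z) + card (nbrs U - fst ` Z)"
    using card_Un_le order_trans by blast
  moreover have "(2 * D - 1) * card ?W = (2 * D - 1) * card Z + (2 * D - 1) * card U"
    using cW by (simp add: add_mult_distrib2)
  ultimately have poorW: "card (nbrs ?W - fst ` ?W) \<le> (2 * D - 1) * card ?W"
    using Z poor unfolding poorly_expanding_def by linarith
  have "card ?W < s"
  proof (rule ccontr)
    assume "\<not> card ?W < s"
    have "card V \<le> card (V - fst ` ?W) + card (fst ` ?W)"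
      using finite_V finite_pairs[OF WV] by (simp add: card_le_card_Diff_plus)
    moreover have "card (V - fst ` ?W) \<le> card (nbrs ?W - fst ` ?W) + card (V - nbrs ?W)"
      using card_le_card_Diff_plus[of "V - fst ` ?W" "V - nbrs ?W"] finite_V
        card_mono[OF finite_Diff[OF finite_nbrs[OF WV]], of "V - fst ` ?W - (V - nbrs ?W)" "fst ` ?W"]
      by fastforce
    moreover have "card (V - nbrs ?W) < s" using card_non_nbrs_less[OF WV] \<open>\<not> card ?W < s\<close> by simp
    moreover have "card (fst ` ?W) \<le> card ?W" using finite_pairs[OF WV] by (rule card_image_le)
    moreover have "(2 * D - 1) * card ?W \<le> (2 * D - 1) * (2 * s)" using cW cZ U(2) by simp
    moreover have "(2 * D - 1) * (2 * s) + 3 * s \<le> (4 * D + 1) * s"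
      using D_ge_3 by (cases D) (auto simp: algebra_simps)
    ultimately show False using big poorW cW cZ U(2) by linarith
  qed
  then show ?thesis using WV poorW by (simp add: poorly_expanding_def)
qed

text \<open>F consists of the first coordinates of a largest poorly expanding set Z: a nonempty small set
  U outside F that expands poorly could be added to Z.\<close>

lemma exists_forbidden_set:
  assumes big: "card V \<ge> (4 * D + 1) * s + D"
  obtains F where "F \<subseteq> V" "card F < s"
    "\<And>U. U \<subseteq> (V - F) \<times> {1..t} \<Longrightarrow> U \<noteq> {} \<Longrightarrow> card U < s \<Longrightarrow>
       (2 * D - 1) * card U < card (nbrs U - F)"
proof -
  have "poorly_expanding {}" using s_pos by (simp add: poorly_expanding_def nbrs_def)
  then obtain Z where Z: "poorly_expanding Z" "\<And>W. poorly_expanding W \<Longrightarrow> card W \<le> card Z"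
    using ex_has_greatest_nat[of poorly_expanding "{}" card s] by (auto simp: poorly_expanding_def)
  have ZV: "Z \<subseteq> V \<times> {1..t}" and finZ: "finite Z" using Z(1) finite_pairs by (auto simp: poorly_expanding_def)
  have "(2 * D - 1) * card U < card (nbrs U - fst ` Z)"
    if U: "U \<subseteq> (V - fst ` Z) \<times> {1..t}" "U \<noteq> {}" "card U < s" for U
  proof (rule ccontr)
    assume "\<not> (2 * D - 1) * card U < card (nbrs U - fst ` Z)"
    then have "poorly_expanding (Z \<union> U)" using poorly_expanding_Un[OF big Z(1) U(1,3)] by simp
    then have "card (Z \<union> U) \<le> card Z" by (rule Z(2))
    moreover have "finite U" using U(1) finite_pairs by auto
    moreover have "Z \<inter> U = {}" using U(1) by force
    ultimately show False using U(2) finZ by (simp add: card_Un_disjoint)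
  qed
  moreover have "fst ` Z \<subseteq> V" "card (fst ` Z) < s"
    using ZV Z(1) card_image_le[OF finZ, of fst] by (auto simp: poorly_expanding_def)
  ultimately show ?thesis using that by blast
qed

lemma initial_demand_bound:
  assumes big: "card V \<ge> (4 * D + 1) * s + D" and F: "F \<subseteq> V" "card F < s"
    and expands: "\<And>U. U \<subseteq> (V - F) \<times> {1..t} \<Longrightarrow> U \<noteq> {} \<Longrightarrow> card U < s \<Longrightarrow>
       (2 * D - 1) * card U < card (nbrs U - F)"
    and A: "A \<subseteq> V - F" "card A \<le> D" and U: "U \<subseteq> (V - F) \<times> {1..t}" "card U \<le> 2 * s"
  shows "(D - 1) * card U \<le> card (nbrs U - (F \<union> A))"
proof -
  have UV: "U \<subseteq> V \<times> {1..t}" and finU: "finite U" using U(1) finite_pairs by auto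
  have finFA: "finite F" "finite A" using F(1) A(1) finite_V finite_subset by blast+
  consider "U = {}" | "U \<noteq> {}" "card U < s" | "card U \<ge> s" by linarith
  then show ?thesis
  proof cases
    case 2
    have "nbrs U - (F \<union> A) = nbrs U - F - A" by blast
    then have "card (nbrs U - F) \<le> card (nbrs U - (F \<union> A)) + card A"
      using card_le_card_Diff_plus[of "nbrs U - F" A] finite_nbrs[OF UV] finFA by simp
    moreover have "(D - 1) * card U + D \<le> (2 * D - 1) * card U"
    proof -
      have "(2 * D - 1) * card U = (D - 1) * card U + D * card U"
        using D_ge_3 by (cases D) (auto simp: algebra_simps)
      moreover have "D \<le> D * card U" using 2 finU by (simp add: Suc_le_eq card_gt_0_iff)
      ultimately show ?thesis by linarith
    qed
    ultimately show ?thesis using expands[OF U(1) 2] A(2) by linarith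
  next
    case 3
    have "card V \<le> card (V - (F \<union> A)) + card (F \<union> A)"
      using finite_V finFA by (intro card_le_card_Diff_plus) auto
    moreover have "card (V - (F \<union> A)) \<le> card (nbrs U - (F \<union> A)) + card (V - nbrs U)"
      using card_le_card_Diff_plus[of "V - (F \<union> A)" "V - nbrs U"] finite_V
        card_mono[OF finite_Diff[OF finite_nbrs[OF UV]], of "V - (F \<union> A) - (V - nbrs U)" "F \<union> A"]
      by fastforce
    moreover have "card (V - nbrs U) < s" by (rule card_non_nbrs_less[OF UV 3])
    moreover have "card (F \<union> A) \<le> card F + card A" by (rule card_Un_le)
    moreover have "(D - 1) * card U \<le> (D - 1) * (2 * s)" using U(2) by simp
    moreover have "(D - 1) * (2 * s) + 2 * s \<le> (4 * D + 1) * s"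
      using D_ge_3 by (cases D) (auto simp: algebra_simps)
    ultimately show ?thesis using big F(2) A(2) by linarith
  qed simp
qed

lemma extendable_initial:
  assumes big: "card V \<ge> (4 * D + 1) * s + D" and F: "F \<subseteq> V" "card F < s"
    and expands: "\<And>U. U \<subseteq> (V - F) \<times> {1..t} \<Longrightarrow> U \<noteq> {} \<Longrightarrow> card U < s \<Longrightarrow>
       (2 * D - 1) * card U < card (nbrs U - F)"
    and A: "A \<subseteq> V - F" "card A \<le> D"
  shows "extendable F (F \<union> A) {}"
proof -
  have "0 \<le> surplus F (F \<union> A) {} U" if U: "U \<subseteq> V \<times> {1..t}" "card U \<le> 2 * s" for U
  proof -
    define U' where "U' = {p \<in> U. fst p \<notin> F}"
    have U': "U' \<subseteq> (V - F) \<times> {1..t}" "card U' \<le> 2 * s"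
      using U card_mono[OF finite_pairs[OF U(1)], of U'] by (auto simp: U'_def)
    have "(\<Sum>p\<in>U. demand F {} p) = (\<Sum>p\<in>U. if fst p \<notin> F then int (D - 1) else 0)"
      by (rule sum.cong) (auto simp: demand_def children_def)
    also have "\<dots> = (\<Sum>p\<in>U'. int (D - 1))"
      unfolding U'_def by (rule sum.inter_filter[symmetric, OF finite_pairs[OF U(1)]])
    finally have dem: "(\<Sum>p\<in>U. demand F {} p) = int ((D - 1) * card U')" by simp
    have "card (nbrs U' - (F \<union> A)) \<le> card (nbrs U - (F \<union> A))"
      using finite_nbrs[OF U(1)] nbrs_mono[of U' U] by (intro card_mono) (auto simp: U'_def)
    with initial_demand_bound[OF big F expands A U']
    have "int ((D - 1) * card U') \<le> int (card (nbrs U - (F \<union> A)))" by linarith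
    with dem show ?thesis by (simp add: surplus_def)
  qed
  then show ?thesis using F A by (auto simp: extendable_def expanding_def)
qed

lemma demand_fresh:
  assumes "extendable F S C" "y \<notin> S" "\<And>j. children C' y j = children C y j"
  shows "demand F C' (y, j) = int (D - 1)"
  using assms extendable_forbidden_subset[OF assms(1)] extendable_children_outside[OF assms(1)]
  by (auto simp: demand_def)

lemma extendable_grow_path:
  assumes "extendable F S C" "v \<in> S" "set cs \<subseteq> {1..t}" "cs \<noteq> []" "demand F C (v, hd cs) \<ge> 1"
    "card S + length cs + (2 * D - 1) * s \<le> card V"
  shows "\<exists>ys. length ys = length cs \<and> distinct ys \<and> set ys \<inter> S = {} \<and>
     extendable F (S \<union> set ys) (C \<union> chain_triples (v # ys) cs)"
  using assms
proof (induction cs arbitrary: v S C)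
  case Nil then show ?case by simp
next
  case (Cons c cs)
  have "c \<in> {1..t}" "demand F C (v, c) \<ge> 1" "card S + (2 * D - 1) * s \<le> card V"
    using Cons.prems(3,5,6) by auto
  then obtain y where y: "y \<notin> S" and ext1: "extendable F (insert y S) (insert (v, c, y) C)"
    using extendable_add_leaf[OF Cons.prems(1,2)] by metis
  show ?case
  proof (cases "cs = []")
    case True
    then show ?thesis using ext1 y by (intro exI[of _ "[y]"]) (simp add: chain_triples_def)
  next
    case False
    have "y \<noteq> v" using y Cons.prems(2) by blast
    then have "demand F (insert (v, c, y) C) (y, hd cs) = int (D - 1)"
      using demand_fresh[OF Cons.prems(1) y] by (simp add: children_def)
    then have "demand F (insert (v, c, y) C) (y, hd cs) \<ge> 1" using D_ge_3 by simp
    moreover have "card (insert y S) + length cs + (2 * D - 1) * s \<le> card V"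
      using Cons.prems(6) extendable_finite[OF Cons.prems(1)] y by simp
    moreover have "y \<in> insert y S" "set cs \<subseteq> {1..t}" using Cons.prems(3) by auto
    ultimately obtain ys where ys: "length ys = length cs" "distinct ys" "set ys \<inter> insert y S = {}"
      "extendable F (insert y S \<union> set ys) (insert (v, c, y) C \<union> chain_triples (y # ys) cs)"
      using Cons.IH[OF ext1 _ _ False] by blast
    have "insert y S \<union> set ys = S \<union> set (y # ys)"
      "insert (v, c, y) C \<union> chain_triples (y # ys) cs = C \<union> chain_triples (v # y # ys) (c # cs)"
      by (auto simp: chain_triples_Cons)
    then show ?thesis using ys y by (intro exI[of _ "y # ys"]) auto
  qed
qed

lemma extendable_add_children:
  assumes "extendable F S C" "f \<in> S" "c \<in> {1..t}" "int k \<le> demand F C (f, c)"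
    "card S + k + (2 * D - 1) * s \<le> card V"
  shows "\<exists>Y. finite Y \<and> card Y = k \<and> Y \<inter> S = {} \<and>
     extendable F (S \<union> Y) (C \<union> (\<lambda>y. (f, c, y)) ` Y)"
  using assms
proof (induction k)
  case 0 then show ?case by (intro exI[of _ "{}"]) simp
next
  case (Suc k)
  obtain Y where Y: "finite Y" "card Y = k" "Y \<inter> S = {}"
    and ext1: "extendable F (S \<union> Y) (C \<union> (\<lambda>y. (f, c, y)) ` Y)"
    using Suc.IH[OF Suc.prems(1-3)] Suc.prems(4,5) by auto
  have f: "f \<notin> F" using Suc.prems(4) by (auto simp: demand_def)
  have "children (C \<union> (\<lambda>y. (f, c, y)) ` Y) f c = children C f c \<union> Y"
    "children C f c \<inter> Y = {}"
    using extendable_tree_edge[OF Suc.prems(1)] Y(3) by (auto simp: children_def)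
  then have "card (children (C \<union> (\<lambda>y. (f, c, y)) ` Y) f c) = card (children C f c) + k"
    using extendable_finite_children[OF Suc.prems(1)] Y(1,2) by (simp add: card_Un_disjoint)
  then have "demand F (C \<union> (\<lambda>y. (f, c, y)) ` Y) (f, c) \<ge> 1"
    using Suc.prems(4) f by (simp add: demand_def)
  moreover have "card (S \<union> Y) + (2 * D - 1) * s \<le> card V"
    using card_Un_disjoint[OF extendable_finite[OF Suc.prems(1)] Y(1)] Y(2,3) Suc.prems(5)
    by (simp add: Int_commute)
  moreover have "f \<in> S \<union> Y" using Suc.prems(2) by blast
  ultimately obtain y where y: "y \<notin> S \<union> Y"
    and ext2: "extendable F (insert y (S \<union> Y)) (insert (f, c, y) (C \<union> (\<lambda>y. (f, c, y)) ` Y))"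
    using extendable_add_leaf[OF ext1 _ Suc.prems(3)] by metis
  have "insert y (S \<union> Y) = S \<union> insert y Y"
    "insert (f, c, y) (C \<union> (\<lambda>y. (f, c, y)) ` Y) = C \<union> (\<lambda>y. (f, c, y)) ` insert y Y"
    by auto
  then show ?case using ext2 y Y by (intro exI[of _ "insert y Y"]) auto
qed

lemma extendable_add_level:
  assumes ext: "extendable F S C" and L: "finite L" "L \<subseteq> S" "L \<inter> F = {}" and c: "c \<in> {1..t}"
    and childless: "\<And>f. f \<in> L \<Longrightarrow> children C f c = {}"
    and budget: "card S + (D - 1) * card L + (2 * D - 1) * s \<le> card V"
  shows "\<exists>kids. (\<forall>f\<in>L. finite (kids f) \<and> card (kids f) = D - 1 \<and> kids f \<inter> S = {}) \<and>
     (\<forall>f\<in>L. \<forall>g\<in>L. f \<noteq> g \<longrightarrow> kids f \<inter> kids g = {}) \<and>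
     extendable F (S \<union> (\<Union>f\<in>L. kids f)) (C \<union> {(f, c, y) | f y. f \<in> L \<and> y \<in> kids f})"
  using L childless budget
proof (induction L rule: finite_induct)
  case empty then show ?case using ext by (intro exI[of _ "\<lambda>_. {}"]) simp
next
  case (insert f L)
  have f: "f \<in> S" "f \<notin> F" "children C f c = {}" using insert.prems by auto
  have "card S + (D - 1) * card L + (2 * D - 1) * s \<le> card V"
    using insert.prems(4) insert.hyps by simp
  then obtain kids where kids: "\<forall>g\<in>L. finite (kids g) \<and> card (kids g) = D - 1 \<and> kids g \<inter> S = {}"
    "\<forall>g\<in>L. \<forall>h\<in>L. g \<noteq> h \<longrightarrow> kids g \<inter> kids h = {}"
    and ext1: "extendable F (S \<union> (\<Union>g\<in>L. kids g)) (C \<union> {(g, c, y) | g y. g \<in> L \<and> y \<in> kids g})"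
    using insert.IH insert.prems(1-3) by blast
  let ?S = "S \<union> (\<Union>g\<in>L. kids g)" and ?C = "C \<union> {(g, c, y) | g y. g \<in> L \<and> y \<in> kids g}"
  have "children ?C f c = {}" using f(3) insert.hyps(2) by (auto simp: children_def)
  then have "int (D - 1) \<le> demand F ?C (f, c)" using f by (simp add: demand_def)
  moreover have "card ?S \<le> card S + (D - 1) * card L"
  proof -
    have "card (\<Union>g\<in>L. kids g) \<le> (\<Sum>g\<in>L. card (kids g))" by (rule card_UN_le[OF insert.hyps(1)])
    then show ?thesis using kids(1) card_Un_le[of S "\<Union>g\<in>L. kids g"] by (simp add: mult.commute)
  qed
  then have "card ?S + (D - 1) + (2 * D - 1) * s \<le> card V"
    using insert.prems(4) insert.hyps by simp
  ultimately obtain Y where Y: "finite Y" "card Y = D - 1" "Y \<inter> ?S = {}"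
    and ext2: "extendable F (?S \<union> Y) (?C \<union> (\<lambda>y. (f, c, y)) ` Y)"
    using extendable_add_children[OF ext1 _ c] f by blast
  define kids' where "kids' = kids(f := Y)"
  have "?S \<union> Y = S \<union> (\<Union>g\<in>insert f L. kids' g)"
    "?C \<union> (\<lambda>y. (f, c, y)) ` Y = C \<union> {(g, c, y) | g y. g \<in> insert f L \<and> y \<in> kids' g}"
    using insert.hyps(2) by (auto simp: kids'_def)
  with ext2 have "extendable F (S \<union> (\<Union>g\<in>insert f L. kids' g))
      (C \<union> {(g, c, y) | g y. g \<in> insert f L \<and> y \<in> kids' g})" by simp
  moreover have "\<forall>g\<in>insert f L. finite (kids' g) \<and> card (kids' g) = D - 1 \<and> kids' g \<inter> S = {}"
    using kids(1) Y insert.hyps(2) by (auto simp: kids'_def)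
  moreover have "\<forall>g\<in>insert f L. \<forall>h\<in>insert f L. g \<noteq> h \<longrightarrow> kids' g \<inter> kids' h = {}"
    using kids(2) Y(3) insert.hyps(2) by (auto simp: kids'_def)
  ultimately show ?case by blast
qed

definition tree_size :: "nat \<Rightarrow> nat" where
  "tree_size n = (\<Sum>k\<in>{1..n}. (D - 1) ^ k)"

lemma tree_size_Suc: "tree_size (Suc n) = tree_size n + (D - 1) ^ Suc n"
  by (simp add: tree_size_def)

lemma tree_size_geometric: "(D - 2) * tree_size n + (D - 1) = (D - 1) ^ Suc n"
proof (induction n)
  case 0 then show ?case by (simp add: tree_size_def)
next
  case (Suc n)
  have "(D - 2) * tree_size (Suc n) + (D - 1) = (D - 1) ^ Suc n + (D - 2) * (D - 1) ^ Suc n"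
    using Suc by (simp add: tree_size_Suc algebra_simps)
  also have "\<dots> = (1 + (D - 2)) * (D - 1) ^ Suc n" by (simp only: distrib_right mult_1_left)
  also have "1 + (D - 2) = D - 1" using D_ge_3 by simp
  finally show ?case by simp
qed

text \<open>With d as in the theorem, the tree of depth d has fewer than (D - 1) s leaves, hence
  fewer than (D + 1) s vertices.\<close>

lemma tree_size_le:
  assumes "d = 0 \<or> (D - 1) ^ (d - 1) < s"
  shows "tree_size d \<le> (D + 1) * (s - 1)"
proof (cases d)
  case 0 then show ?thesis by (simp add: tree_size_def)
next
  case (Suc d')
  then have "(D - 1) ^ d' \<le> s - 1" using assms by simp
  have "(D - 2) * tree_size d \<le> (D - 1) ^ Suc d" using tree_size_geometric[of d] by linarith
  also have "\<dots> = (D - 1) ^ 2 * (D - 1) ^ d'" by (simp add: Suc power2_eq_square)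
  also have "\<dots> \<le> (D - 1) ^ 2 * (s - 1)" using \<open>(D - 1) ^ d' \<le> s - 1\<close> by simp
  also have "(D - 1) ^ 2 \<le> (D - 2) * (D + 1)"
    using D_ge_3 by (cases D) (auto simp: power2_eq_square algebra_simps)
  then have "(D - 1) ^ 2 * (s - 1) \<le> (D - 2) * (D + 1) * (s - 1)" by simp
  finally have "(D - 2) * tree_size d \<le> (D - 2) * ((D + 1) * (s - 1))" by (simp only: mult.assoc)
  moreover have "D - 2 > 0" using D_ge_3 by simp
  ultimately show ?thesis by (meson mult_le_cancel1 not_less0 less_imp_not_less)
qed

lemma extendable_card_children_le:
  assumes "extendable F S C"
  shows "card (children C u j) \<le> card (out_edges C u)"
proof -
  have "out_edges C u \<subseteq> {1..t} \<times> S"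
    using extendable_tree_edge[OF assms] by (auto simp: out_edges_def)
  then have "finite (out_edges C u)" using extendable_finite[OF assms] finite_subset by blast
  moreover have "Pair j ` children C u j \<subseteq> out_edges C u" by (auto simp: children_def out_edges_def)
  ultimately show ?thesis using card_inj_on_le[of "Pair j"] by (auto simp: inj_on_def)
qed

lemma extendable_finite_out_edges:
  assumes "extendable F S C"
  shows "finite (out_edges C u)"
proof -
  have "out_edges C u \<subseteq> {1..t} \<times> S"
    using extendable_tree_edge[OF assms] by (auto simp: out_edges_def)
  then show ?thesis using extendable_finite[OF assms] finite_subset by blast
qed

text \<open>Root-to-leaf paths of a complete (D - 1)-ary tree of depth length ts rooted at r, whose
  edges on each level have the colour prescribed by ts, all of whose vertices except r are new
  compared to S0, and whose leaves have no children yet.\<close>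

definition leaf_paths ::
    "'v set \<Rightarrow> 'v set \<Rightarrow> ('v \<times> nat \<times> 'v) set \<Rightarrow> 'v \<Rightarrow> nat list \<Rightarrow> 'v list set \<Rightarrow> bool" where
  "leaf_paths S0 S C r ts Ls \<longleftrightarrow> finite Ls \<and> card Ls = (D - 1) ^ length ts \<and> inj_on last Ls \<and>
     (\<forall>l\<in>Ls. hd l = r \<and> length l = Suc (length ts) \<and> distinct l \<and> set (tl l) \<subseteq> S - S0 \<and>
        chain_triples l ts \<subseteq> C \<and> (\<forall>j. children C (last l) j = {}))"

lemma leaf_paths_root:
  "(\<And>j. children C r j = {}) \<Longrightarrow> leaf_paths S0 S C r [] {[r]}"
  by (simp add: leaf_paths_def chain_triples_def)

lemma extendable_extend_leaf_paths:
  assumes ext: "extendable F S C" and Ls: "leaf_paths S0 S C r ts Ls"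
    and r: "r \<in> S0" "S0 \<subseteq> S" "F \<subseteq> S0" "r \<notin> F" and c: "c \<in> {1..t}"
    and budget: "card S + (D - 1) ^ Suc (length ts) + (2 * D - 1) * s \<le> card V"
  obtains S' C' Ls' where "extendable F S' C'" "S \<subseteq> S'" "card S' \<le> card S + (D - 1) ^ Suc (length ts)"
    "C \<subseteq> C'" "\<And>u j y. (u, j, y) \<in> C' - C \<Longrightarrow> y \<in> S' - S \<and> u \<in> last ` Ls"
    "leaf_paths S0 S' C' r (ts @ [c]) Ls'"
proof -
  have Lfin: "finite Ls" and Lcard: "card Ls = (D - 1) ^ length ts" and Linj: "inj_on last Ls"
    and Lp: "\<And>l. l \<in> Ls \<Longrightarrow> hd l = r \<and> length l = Suc (length ts) \<and> distinct l \<and>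
      set (tl l) \<subseteq> S - S0 \<and> chain_triples l ts \<subseteq> C \<and> (\<forall>j. children C (last l) j = {})"
    using Ls unfolding leaf_paths_def by blast+
  let ?L = "last ` Ls"
  have "last l \<in> insert r (S - S0)" if "l \<in> Ls" for l
  proof -
    have "l \<noteq> []" "hd l = r" "set (tl l) \<subseteq> S - S0" using Lp[OF that] by auto
    then show ?thesis using last_in_hd_tl[of l] by blast
  qed
  then have L_sub: "?L \<subseteq> S" "?L \<inter> F = {}" using r by blast+
  have card_L: "card ?L = card Ls" using Linj by (rule card_image)
  then have "card S + (D - 1) * card ?L + (2 * D - 1) * s \<le> card V"
    using Lcard budget by (simp add: mult.commute)
  moreover have "finite ?L" "\<And>f. f \<in> ?L \<Longrightarrow> children C f c = {}" using Lfin Lp by auto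
  ultimately obtain kids where kids: "\<forall>f\<in>?L. finite (kids f) \<and> card (kids f) = D - 1 \<and> kids f \<inter> S = {}"
      "\<forall>f\<in>?L. \<forall>g\<in>?L. f \<noteq> g \<longrightarrow> kids f \<inter> kids g = {}"
    and ext': "extendable F (S \<union> (\<Union>f\<in>?L. kids f)) (C \<union> {(f, c, y) | f y. f \<in> ?L \<and> y \<in> kids f})"
    using extendable_add_level[OF ext _ L_sub c] by blast
  define S' where "S' = S \<union> (\<Union>f\<in>?L. kids f)"
  define C' where "C' = C \<union> {(f, c, y) | f y. f \<in> ?L \<and> y \<in> kids f}"
  define Ls' where "Ls' = (\<lambda>(l, y). l @ [y]) ` (SIGMA l:Ls. kids (last l))"
  have Ls': "finite Ls'" "card Ls' = (D - 1) * card Ls" "inj_on last Ls'"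
    unfolding Ls'_def using kids Lfin Linj by (auto intro!: extend_lists_by_disjoint_sets) blast+
  have card_S': "card S' \<le> card S + (D - 1) ^ Suc (length ts)"
  proof -
    have "card (\<Union>f\<in>?L. kids f) \<le> (\<Sum>f\<in>?L. card (kids f))" using Lfin by (intro card_UN_le) simp
    also have "\<dots> = (\<Sum>f\<in>?L. D - 1)" using kids(1) by (intro sum.cong) auto
    also have "\<dots> = (D - 1) * card Ls" using card_L by simp
    finally show ?thesis using Lcard card_Un_le[of S "\<Union>f\<in>?L. kids f"] by (simp add: S'_def)
  qed
  have new: "y \<in> S' - S \<and> u \<in> ?L" if "(u, j, y) \<in> C' - C" for u j y
    using that kids(1) by (auto simp: S'_def C'_def)
  have "leaf_paths S0 S' C' r (ts @ [c]) Ls'"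
    unfolding leaf_paths_def
  proof (intro conjI ballI)
    show "finite Ls'" "inj_on last Ls'" by (fact Ls'(1), fact Ls'(3))
    show "card Ls' = (D - 1) ^ length (ts @ [c])" using Ls'(2) Lcard by simp
  next
    fix a assume "a \<in> Ls'"
    then obtain l y where a: "a = l @ [y]" and l: "l \<in> Ls" and y: "y \<in> kids (last l)"
      by (auto simp: Ls'_def)
    have lp: "hd l = r" "length l = Suc (length ts)" "distinct l" "set (tl l) \<subseteq> S - S0"
      "chain_triples l ts \<subseteq> C" using Lp[OF l] by auto
    have y_new: "y \<notin> S" "y \<in> S'" using kids(1) y l by (auto simp: S'_def)
    have "set l \<subseteq> insert r (set (tl l))" using lp(1) by (cases l) auto
    then have set_l: "set l \<subseteq> S" using lp(4) r by blast
    have "l \<noteq> []" using lp(2) by auto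
    then show "hd a = r" "length a = Suc (length (ts @ [c]))" using a lp by auto
    show "distinct a" using a lp(3) set_l y_new by auto
    have "set (tl a) = insert y (set (tl l))" using a \<open>l \<noteq> []\<close> by (cases l) auto
    then show "set (tl a) \<subseteq> S' - S0" using lp(4) y_new r by (auto simp: S'_def)
    have "chain_triples a (ts @ [c]) = chain_triples l ts \<union> chain_triples [last l, y] [c]"
      using chain_triples_append[of l ts "[last l, y]" "[c]"] a lp(2) by simp
    then show "chain_triples a (ts @ [c]) \<subseteq> C'"
      using lp(5) y l by (auto simp: C'_def chain_triples_def)
    have "y \<notin> ?L" using L_sub y_new by blast
    then show "\<forall>j. children C' (last a) j = {}"
      using a extendable_children_outside[OF ext y_new(1)] by (auto simp: C'_def children_def)
  qed
  then show ?thesis using that ext' card_S' new unfolding S'_def C'_def by blast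
qed

lemma extendable_grow_tree:
  assumes ext: "extendable F S C" and r: "r \<in> S" "r \<notin> F" "\<And>j. children C r j = {}"
    and ts: "set ts \<subseteq> {1..t}" and budget: "card S + tree_size (length ts) + (2 * D - 1) * s \<le> card V"
  obtains S' C' Ls where "extendable F S' C'" "S \<subseteq> S'" "card S' \<le> card S + tree_size (length ts)"
    "C \<subseteq> C'" "\<And>u j y. (u, j, y) \<in> C' - C \<Longrightarrow> y \<in> S' - S \<and> (u \<in> S' - S \<or> u = r)"
    "leaf_paths S S' C' r ts Ls"
proof -
  have "\<exists>S' C' Ls. extendable F S' C' \<and> S \<subseteq> S' \<and> card S' \<le> card S + tree_size (length ts) \<and>
    C \<subseteq> C' \<and> (\<forall>u j y. (u, j, y) \<in> C' - C \<longrightarrow> y \<in> S' - S \<and> (u \<in> S' - S \<or> u = r)) \<and>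
    leaf_paths S S' C' r ts Ls"
    using ts budget
  proof (induction ts rule: rev_induct)
    case Nil
    show ?case using ext leaf_paths_root[of C r S S] r(3) by (auto simp: tree_size_def)
  next
    case (snoc c ts)
    then obtain S1 C1 Ls where ext1: "extendable F S1 C1" and S1: "S \<subseteq> S1"
      "card S1 \<le> card S + tree_size (length ts)" and C1: "C \<subseteq> C1"
      "\<forall>u j y. (u, j, y) \<in> C1 - C \<longrightarrow> y \<in> S1 - S \<and> (u \<in> S1 - S \<or> u = r)"
      and Ls: "leaf_paths S S1 C1 r ts Ls"
      by (auto simp: tree_size_Suc)
    have budget': "card S1 + (D - 1) ^ Suc (length ts) + (2 * D - 1) * s \<le> card V"
      using snoc.prems(2) S1(2) by (simp add: tree_size_Suc)
    have c: "c \<in> {1..t}" using snoc.prems(1) by simp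
    obtain S2 C2 Ls' where ext2: "extendable F S2 C2" and S2: "S1 \<subseteq> S2"
      "card S2 \<le> card S1 + (D - 1) ^ Suc (length ts)" and C2: "C1 \<subseteq> C2"
      "\<And>u j y. (u, j, y) \<in> C2 - C1 \<Longrightarrow> y \<in> S2 - S1 \<and> u \<in> last ` Ls"
      and Ls': "leaf_paths S S2 C2 r (ts @ [c]) Ls'"
      using extendable_extend_leaf_paths[OF ext1 Ls r(1) S1(1) extendable_forbidden_subset[OF ext] r(2) c budget']
      by blast
    have leaves: "last l \<in> S1 - S \<or> last l = r" if "l \<in> Ls" for l
    proof -
      have "l \<noteq> []" "hd l = r" "set (tl l) \<subseteq> S1 - S"
        using Ls that by (auto simp: leaf_paths_def)
      then show ?thesis using last_in_hd_tl[of l] by blast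
    qed
    have "y \<in> S2 - S \<and> (u \<in> S2 - S \<or> u = r)" if "(u, j, y) \<in> C2 - C" for u j y
    proof (cases "(u, j, y) \<in> C1")
      case True then show ?thesis using that C1(2) S2(1) by blast
    next
      case False then show ?thesis using that C2(2)[of u j y] leaves S1(1) S2(1) by blast
    qed
    moreover have "card S2 \<le> card S + tree_size (length (ts @ [c]))"
      using S1(2) S2(2) by (simp add: tree_size_Suc)
    ultimately show ?case using ext2 S1(1) S2(1) C1(1) C2(1) Ls' by blast
  qed
  then show ?thesis using that by blast
qed

lemma extendable_chain_walk:
  assumes "extendable F S C" "chain_triples xs cs \<subseteq> C" "length xs = Suc (length cs)"
  shows "colored_walk E xs cs"
  unfolding colored_walk_def
proof (intro conjI allI impI)
  fix k assume "k < length cs"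
  then have "(xs ! k, cs ! k, xs ! Suc k) \<in> C" using assms(2) by (auto simp: chain_triples_def)
  then show "{xs ! k, xs ! Suc k} \<in> E (cs ! k)" using extendable_tree_edge[OF assms(1)] by blast
qed (rule assms(3))

text \<open>Only the triples whose child survives are kept. Since every surviving vertex outside S
  hangs below a surviving vertex, the removed vertices are closed under taking children.\<close>

lemma extendable_keep:
  assumes ext: "extendable F S' C" and S: "F \<subseteq> S" "S \<subseteq> S'" and K: "K \<subseteq> S'"
    and outside: "\<And>u j y. (u, j, y) \<in> C \<Longrightarrow> u \<notin> S \<Longrightarrow> y \<notin> S"
    and parent: "\<And>z. z \<in> K - S \<Longrightarrow> \<exists>p\<in>K. \<exists>j. (p, j, z) \<in> C"
  shows "extendable F (S \<union> K) {(u, j, y). (u, j, y) \<in> C \<and> y \<in> S \<union> K}"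
proof -
  define R where "R = S' - (S \<union> K)"
  have closed: "y \<in> R" if "(u, j, y) \<in> C" "u \<in> R" for u j y
  proof (rule ccontr)
    assume "y \<notin> R"
    moreover have "y \<notin> S" "y \<in> S'"
      using that outside extendable_tree_edge[OF ext] by (auto simp: R_def)
    ultimately have "y \<in> K - S" by (auto simp: R_def)
    then obtain p j' where "p \<in> K" "(p, j', y) \<in> C" using parent by blast
    then show False using extendable_unique_parent[OF ext that(1)] that(2) by (auto simp: R_def)
  qed
  have "extendable F (S' - R) {(u, j, y). (u, j, y) \<in> C \<and> y \<notin> R}"
    using S by (intro extendable_prune[OF ext _ _ closed]) (auto simp: R_def)
  moreover have "S' - R = S \<union> K" using S K by (auto simp: R_def)
  moreover have "{(u, j, y). (u, j, y) \<in> C \<and> y \<notin> R} = {(u, j, y). (u, j, y) \<in> C \<and> y \<in> S \<union> K}"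
    using extendable_tree_edge[OF ext] by (auto simp: R_def)
  ultimately show ?thesis by simp
qed

text \<open>A broom: a path (the handle) leaving r, followed by a complete (D - 1)-ary tree hanging
  from the end of the handle. Its root-to-leaf paths are returned.\<close>

lemma extendable_broom:
  assumes ext: "extendable F S C" and r: "r \<in> S"
    and hs: "hs \<noteq> []" "set hs \<subseteq> {1..t}" "demand F C (r, hd hs) \<ge> 1" and ts: "set ts \<subseteq> {1..t}"
    and budget: "card S + length hs + tree_size (length ts) + (2 * D - 1) * s \<le> card V"
  obtains S' C' Ls y1 where "extendable F S' C'" "S \<subseteq> S'" "C \<subseteq> C'"
    "card S' \<le> card S + length hs + tree_size (length ts)"
    "\<And>u j y. (u, j, y) \<in> C' - C \<Longrightarrow> y \<in> S' - S \<and> (u \<in> S \<longrightarrow> u = r \<and> j = hd hs \<and> y = y1)"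
    "card Ls = (D - 1) ^ length ts" "inj_on last Ls"
    "\<And>l. l \<in> Ls \<Longrightarrow> hd l = r \<and> length l = Suc (length hs + length ts) \<and> distinct l \<and>
       set (tl l) \<subseteq> S' - S \<and> chain_triples l (hs @ ts) \<subseteq> C'"
proof -
  obtain ys where ys: "length ys = length hs" "distinct ys" "set ys \<inter> S = {}"
    and ext1: "extendable F (S \<union> set ys) (C \<union> chain_triples (r # ys) hs)"
    using extendable_grow_path[OF ext r hs(2,1,3)] budget by auto
  let ?S1 = "S \<union> set ys" and ?C1 = "C \<union> chain_triples (r # ys) hs" and ?x = "last (r # ys)"
  have handle: "length (r # ys) = Suc (length hs)" "distinct (r # ys)" using ys r by auto
  have x: "?x \<in> ?S1" "?x \<notin> S" using ys hs(1) by (cases ys rule: rev_cases; auto)+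
  then have x_root: "?x \<notin> F" "children ?C1 ?x j = {}" for j
    using extendable_forbidden_subset[OF ext] extendable_children_outside[OF ext]
      chain_triples_last[OF handle] by (auto simp: children_def)
  have "card ?S1 = card S + card (set ys)"
    using ys(3) extendable_finite[OF ext] by (intro card_Un_disjoint) auto
  then have card_S1: "card ?S1 = card S + length hs" using ys(1,2) by (simp add: distinct_card)
  obtain S' C' Lt where ext': "extendable F S' C'" and S': "?S1 \<subseteq> S'"
    "card S' \<le> card ?S1 + tree_size (length ts)" and C': "?C1 \<subseteq> C'"
    "\<And>u j y. (u, j, y) \<in> C' - ?C1 \<Longrightarrow> y \<in> S' - ?S1 \<and> (u \<in> S' - ?S1 \<or> u = ?x)"
    and Lt: "leaf_paths ?S1 S' C' ?x ts Lt"
    using extendable_grow_tree[OF ext1 x(1) x_root ts] budget card_S1 by (auto simp: add.assoc)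
  have Lt': "finite Lt" "card Lt = (D - 1) ^ length ts" "inj_on last Lt"
    "\<And>l. l \<in> Lt \<Longrightarrow> hd l = ?x \<and> length l = Suc (length ts) \<and> distinct l \<and>
      set (tl l) \<subseteq> S' - ?S1 \<and> chain_triples l ts \<subseteq> C'"
    using Lt unfolding leaf_paths_def by blast+
  define Ls where "Ls = (\<lambda>l. (r # ys) @ tl l) ` Lt"
  have "l \<noteq> [] \<and> hd l = last (r # ys)" if "l \<in> Lt" for l
    using Lt'(4)[OF that] by (metis list.size(3) nat.distinct(1))
  then have "card Ls = card Lt" "inj_on last Ls"
    unfolding Ls_def using graft_lists[of "r # ys" Lt] Lt'(3) by auto
  then have card_Ls: "card Ls = (D - 1) ^ length ts" and inj_Ls: "inj_on last Ls" using Lt'(2) by auto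
  have paths: "hd l = r \<and> length l = Suc (length hs + length ts) \<and> distinct l \<and>
       set (tl l) \<subseteq> S' - S \<and> chain_triples l (hs @ ts) \<subseteq> C'" if l_in: "l \<in> Ls" for l
  proof -
    obtain l' where l: "l = (r # ys) @ tl l'" "l' \<in> Lt" using l_in by (auto simp: Ls_def)
    note l' = Lt'(4)[OF l(2)]
    have "set (r # ys) \<subseteq> ?S1" using r by auto
    then have "distinct l" using l l' handle(2) distinct_tl[of l'] by auto
    moreover have "chain_triples l (hs @ ts) = chain_triples (r # ys) hs \<union> chain_triples l' ts"
      unfolding l(1) using l' handle(1) by (intro chain_triples_append) auto
    ultimately show ?thesis using l l' ys(1,3) S'(1) C'(1) by auto
  qed
  have new: "y \<in> S' - S \<and> (u \<in> S \<longrightarrow> u = r \<and> j = hd hs \<and> y = (r # ys) ! 1)"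
    if "(u, j, y) \<in> C' - C" for u j y
  proof (cases "(u, j, y) \<in> chain_triples (r # ys) hs")
    case True
    then show ?thesis using chain_triples_source[OF True handle] ys(3) S'(1) by auto
  next
    case False
    then show ?thesis using that C'(2)[of u j y] x(2) by auto
  qed
  have "S \<subseteq> S'" "C \<subseteq> C'" "card S' \<le> card S + length hs + tree_size (length ts)"
    using S' C'(1) card_S1 by auto
  from that[OF ext' this new card_Ls inj_Ls paths] show ?thesis .
qed

text \<open>The brooms grown from x0 and y0 have handles of total length length cs - 2d - 1 and trees of
  depth d, hence at least s leaves each; s-joinedness provides two adjacent leaves.\<close>

lemma extendable_joined_brooms:
  assumes ext: "extendable F S C" and xy: "x0 \<in> S" "y0 \<in> S" "x0 \<noteq> y0"
    and cs: "set cs \<subseteq> {1..t}" "2 * d + 3 \<le> length cs" and sd: "s \<le> (D - 1) ^ d"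
    and dx: "demand F C (x0, hd cs) \<ge> 1" and dy: "demand F C (y0, last cs) \<ge> 1"
    and budget: "card S + (length cs - 1) + 2 * tree_size d + (2 * D - 1) * s \<le> card V"
  obtains S' C' z z' lx ly cx cm cy where "extendable F S' C'" "S \<subseteq> S'" "cs = cx @ cm # rev cy"
    "\<And>u j y. (u, j, y) \<in> C' - C \<Longrightarrow>
       y \<in> S' - S \<and> (u \<in> S \<longrightarrow> (u, j, y) \<in> {(x0, hd cs, z), (y0, last cs, z')})"
    "hd lx = x0" "length lx = Suc (length cx)" "distinct lx" "chain_triples lx cx \<subseteq> C'"
    "hd ly = y0" "length ly = Suc (length cy)" "distinct ly" "chain_triples ly cy \<subseteq> C'"
    "set (tl lx) \<subseteq> S' - S" "set (tl ly) \<subseteq> S' - S" "set (tl lx) \<inter> set (tl ly) = {}"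
    "{last lx, last ly} \<in> E cm"
proof -
  obtain hx tx cm cy where cs_eq: "cs = (hx @ tx) @ cm # rev cy" and hx: "hx \<noteq> []"
    and len: "length tx = d" "length cy = Suc d"
    using split_around_middle[OF cs(2)] by blast
  have cy: "cy = [hd cy] @ tl cy" "cy \<noteq> []" using len(2) by (cases cy, auto)+
  have "hd cs = hd hx" using hx by (subst cs_eq) simp
  moreover have "last cs = hd cy" using cy(2) by (subst cs_eq) (simp add: last_rev)
  ultimately have ends: "hd hx = hd cs" "hd cy = last cs" by simp_all
  have "set cs = set hx \<union> set tx \<union> insert cm (set ([hd cy] @ tl cy))" by (subst cs_eq, subst cy(1)) auto
  then have cols: "set hx \<subseteq> {1..t}" "set tx \<subseteq> {1..t}" "set [hd cy] \<subseteq> {1..t}" "set (tl cy) \<subseteq> {1..t}"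
    "cm \<in> {1..t}" using cs(1) by auto
  have "length cs = length hx + 2 * d + 2" using len by (subst cs_eq) simp
  then have budget1: "card S + length hx + tree_size (length tx) + (2 * D - 1) * s \<le> card V"
    using budget len by simp
  have dx': "demand F C (x0, hd hx) \<ge> 1" using dx ends by simp
  obtain S1 C1 Lx z where ext1: "extendable F S1 C1" and S1: "S \<subseteq> S1" "C \<subseteq> C1"
      "card S1 \<le> card S + length hx + tree_size (length tx)"
    and new1: "\<And>u j y. (u, j, y) \<in> C1 - C \<Longrightarrow> y \<in> S1 - S \<and> (u \<in> S \<longrightarrow> u = x0 \<and> j = hd hx \<and> y = z)"
    and Lx: "card Lx = (D - 1) ^ length tx" "inj_on last Lx"
      "\<And>l. l \<in> Lx \<Longrightarrow> hd l = x0 \<and> length l = Suc (length hx + length tx) \<and> distinct l \<and>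
         set (tl l) \<subseteq> S1 - S \<and> chain_triples l (hx @ tx) \<subseteq> C1"
    by (rule extendable_broom[OF ext xy(1) hx cols(1) dx' cols(2) budget1]) (rule that)
  have "children C1 y0 (last cs) = children C y0 (last cs)"
  proof (rule set_eqI)
    fix y show "y \<in> children C1 y0 (last cs) \<longleftrightarrow> y \<in> children C y0 (last cs)"
      using new1[of y0 "last cs" y] S1(2) xy(2,3) unfolding children_def by blast
  qed
  then have "demand F C1 (y0, last cs) = demand F C (y0, last cs)" by (rule demand_cong)
  then have dy': "demand F C1 (y0, hd [hd cy]) \<ge> 1" using dy ends by simp
  have budget2: "card S1 + length [hd cy] + tree_size (length (tl cy)) + (2 * D - 1) * s \<le> card V"
    using budget S1(3) len \<open>length cs = length hx + 2 * d + 2\<close> by simp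
  have "y0 \<in> S1" "[hd cy] \<noteq> []" using xy(2) S1(1) by auto
  obtain S2 C2 Ly z' where ext2: "extendable F S2 C2" and S2: "S1 \<subseteq> S2" "C1 \<subseteq> C2"
    and new2: "\<And>u j y. (u, j, y) \<in> C2 - C1 \<Longrightarrow> y \<in> S2 - S1 \<and> (u \<in> S1 \<longrightarrow> u = y0 \<and> j = hd [hd cy] \<and> y = z')"
    and Ly: "card Ly = (D - 1) ^ length (tl cy)" "inj_on last Ly"
      "\<And>l. l \<in> Ly \<Longrightarrow> hd l = y0 \<and> length l = Suc (length [hd cy] + length (tl cy)) \<and> distinct l \<and>
         set (tl l) \<subseteq> S2 - S1 \<and> chain_triples l ([hd cy] @ tl cy) \<subseteq> C2"
    by (rule extendable_broom[OF ext1 \<open>y0 \<in> S1\<close> \<open>[hd cy] \<noteq> []\<close> cols(3) dy' cols(4) budget2]) (rule that)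
  have "last l \<in> S2" if "l \<in> Lx" for l
    using Lx(3)[OF that] last_in_hd_tl[of l] xy(1) S1(1) S2(1) by (cases l) auto
  moreover have "last l \<in> S2" if "l \<in> Ly" for l
    using Ly(3)[OF that] last_in_hd_tl[of l] xy(2) S1(1) S2(1) by (cases l) auto
  ultimately have "last ` Lx \<subseteq> V" "last ` Ly \<subseteq> V"
    using extendable_subset_V[OF ext2] by blast+
  moreover have "s \<le> card Lx" "s \<le> card Ly" using Lx(1) Ly(1) sd len by simp_all
  ultimately obtain lx ly where lx: "lx \<in> Lx" and ly: "ly \<in> Ly" and join: "{last lx, last ly} \<in> E cm"
    using exists_joined_pair[of last Lx Ly cm] Lx(2) Ly(2) cols(5) by blast
  have new: "y \<in> S2 - S \<and> (u \<in> S \<longrightarrow> (u, j, y) \<in> {(x0, hd cs, z), (y0, last cs, z')})"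
    if "(u, j, y) \<in> C2 - C" for u j y
    using that new1[of u j y] new2[of u j y] S1(1) S2(1) ends by (cases "(u, j, y) \<in> C1") auto
  have lxf: "hd lx = x0" "length lx = Suc (length (hx @ tx))" "distinct lx" "chain_triples lx (hx @ tx) \<subseteq> C2"
    using Lx(3)[OF lx] S2(2) by auto
  have lyf: "hd ly = y0" "length ly = Suc (length cy)" "distinct ly" "chain_triples ly cy \<subseteq> C2"
    using Ly(3)[OF ly] cy len by auto
  have "set (tl lx) \<subseteq> S2 - S" "set (tl ly) \<subseteq> S2 - S" "set (tl lx) \<inter> set (tl ly) = {}"
    using Lx(3)[OF lx] Ly(3)[OF ly] S1(1) S2(1) by auto
  moreover have "S \<subseteq> S2" using S1(1) S2(1) by blast
  ultimately show ?thesis using that[OF ext2 _ cs_eq new lxf lyf _ _ _ join] by blast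
qed

text \<open>Joining the two broom paths lx and ly at their leaves gives the required path; everything
  else grown on the way is pruned again.\<close>

lemma extendable_connect:
  assumes ext: "extendable F S C" and xy: "x0 \<in> S" "y0 \<in> S" "x0 \<noteq> y0"
    and cs: "set cs \<subseteq> {1..t}" "2 * d + 3 \<le> length cs" and sd: "s \<le> (D - 1) ^ d"
    and dx: "demand F C (x0, hd cs) \<ge> 1" and dy: "demand F C (y0, last cs) \<ge> 1"
    and budget: "card S + (length cs - 1) + 2 * tree_size d + (2 * D - 1) * s \<le> card V"
  obtains Q C' z z' where "colored_walk E Q cs" "hd Q = x0" "last Q = y0" "distinct Q"
    "set Q \<inter> S = {x0, y0}" "extendable F (S \<union> set Q) C'"
    "{(u, j, y). (u, j, y) \<in> C' \<and> u \<in> S} \<subseteq> insert (x0, hd cs, z) (insert (y0, last cs, z') C)"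
proof -
  obtain S' C' z z' lx ly cx cm cy where ext': "extendable F S' C'" and S': "S \<subseteq> S'"
    and cs_eq: "cs = cx @ cm # rev cy"
    and new: "\<And>u j y. (u, j, y) \<in> C' - C \<Longrightarrow>
       y \<in> S' - S \<and> (u \<in> S \<longrightarrow> (u, j, y) \<in> {(x0, hd cs, z), (y0, last cs, z')})"
    and lx: "hd lx = x0" "length lx = Suc (length cx)" "distinct lx" "chain_triples lx cx \<subseteq> C'"
    and ly: "hd ly = y0" "length ly = Suc (length cy)" "distinct ly" "chain_triples ly cy \<subseteq> C'"
    and tails: "set (tl lx) \<subseteq> S' - S" "set (tl ly) \<subseteq> S' - S" "set (tl lx) \<inter> set (tl ly) = {}"
    and join: "{last lx, last ly} \<in> E cm"
    by (rule extendable_joined_brooms[OF ext xy cs sd dx dy budget]) (rule that)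
  define Q where "Q = lx @ rev ly"
  have ne: "lx \<noteq> []" "ly \<noteq> []" using lx(2) ly(2) by auto
  have sets: "set lx = insert x0 (set (tl lx))" "set ly = insert y0 (set (tl ly))"
    using set_hd_tl ne lx(1) ly(1) by metis+
  have "colored_walk E Q cs"
    unfolding Q_def cs_eq using join ne(2)
    by (intro colored_walk_join colored_walk_rev extendable_chain_walk[OF ext'] lx(2,4) ly(2,4))
      (simp add: hd_rev)
  moreover have "hd Q = x0" "last Q = y0" using ne lx(1) ly(1) by (simp_all add: Q_def last_rev)
  moreover have "distinct Q" using lx(3) ly(3) sets tails xy by (auto simp: Q_def)
  moreover have set_Q: "set Q \<inter> S = {x0, y0}" "set Q \<subseteq> S'"
    using sets tails xy S' by (auto simp: Q_def)
  moreover have "extendable F (S \<union> set Q) {(u, j, y). (u, j, y) \<in> C' \<and> y \<in> S \<union> set Q}"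
  proof (rule extendable_keep[OF ext' extendable_forbidden_subset[OF ext] S' set_Q(2)])
    show "y \<notin> S" if "(u, j, y) \<in> C'" "u \<notin> S" for u j y
      using that new extendable_tree_edge[OF ext] by blast
    show "\<exists>p\<in>set Q. \<exists>j. (p, j, z) \<in> C'" if "z \<in> set Q - S" for z
    proof -
      have "z \<in> set (tl lx) \<or> z \<in> set (tl ly)" using that sets xy by (auto simp: Q_def)
      then show ?thesis
        using chain_triples_parent[OF lx(2), of z] chain_triples_parent[OF ly(2), of z] lx(4) ly(4)
        unfolding Q_def by fastforce
    qed
  qed
  moreover have "{(u, j, y). (u, j, y) \<in> {(u, j, y). (u, j, y) \<in> C' \<and> y \<in> S \<union> set Q} \<and> u \<in> S}
      \<subseteq> insert (x0, hd cs, z) (insert (y0, last cs, z') C)"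
    using new by blast
  ultimately show ?thesis using that by blast
qed

end

section \<open>Embedding the subdivision path by path\<close>

locale subdivision_embedding = joined_family V t E s D for V :: "'v set" and t E s D +
  fixes F :: "'v set" and VH :: "'h set" and B :: "'h set" and P :: "'h \<Rightarrow> 'h \<Rightarrow> 'h list"
    and c :: "'h set \<Rightarrow> nat" and ph :: "'h \<Rightarrow> 'v" and d :: nat
  assumes initial: "extendable F (F \<union> ph ` B) {}"
    and ph_inj: "inj_on ph B" and ph_V: "ph ` B \<subseteq> V - F" and card_F: "card F < s"
    and finite_VH: "finite VH" and B_VH: "B \<subseteq> VH" and card_B: "card B = D"
    and paths: "\<And>a b. a \<in> B \<Longrightarrow> b \<in> B \<Longrightarrow> a \<noteq> b \<Longrightarrow>
      P b a = rev (P a b) \<and> P a b \<noteq> [] \<and> hd (P a b) = a \<and> last (P a b) = b \<and>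
      distinct (P a b) \<and> length (P a b) \<ge> 2 * d + 4 \<and> (set (P a b) - {a, b}) \<inter> B = {}"
    and internally_disjoint: "\<And>a b a' b'. a \<in> B \<Longrightarrow> b \<in> B \<Longrightarrow> a' \<in> B \<Longrightarrow> b' \<in> B \<Longrightarrow>
      a \<noteq> b \<Longrightarrow> a' \<noteq> b' \<Longrightarrow> {a, b} \<noteq> {a', b'} \<Longrightarrow>
      (set (P a b) - {a, b}) \<inter> (set (P a' b') - {a', b'}) = {}"
    and paths_VH: "\<And>a b. a \<in> B \<Longrightarrow> b \<in> B \<Longrightarrow> a \<noteq> b \<Longrightarrow> set (P a b) \<subseteq> VH"
    and colours: "\<And>a b k. a \<in> B \<Longrightarrow> b \<in> B \<Longrightarrow> a \<noteq> b \<Longrightarrow> Suc k < length (P a b) \<Longrightarrow>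
      c {P a b ! k, P a b ! Suc k} \<in> {1..t}"
    and branching: "s \<le> (D - 1) ^ d"
    and budget: "card VH + (s - 1) + 2 * tree_size d + (2 * D - 1) * s \<le> card V"
begin

definition branch_pairs :: "'h set set" where
  "branch_pairs = {{a, b} | a b. a \<in> B \<and> b \<in> B \<and> a \<noteq> b}"

definition orient :: "'h set \<Rightarrow> 'h \<times> 'h" where
  "orient e = (SOME ab. fst ab \<in> B \<and> snd ab \<in> B \<and> fst ab \<noteq> snd ab \<and> e = {fst ab, snd ab})"

definition src :: "'h set \<Rightarrow> 'h" where "src e = fst (orient e)"
definition tgt :: "'h set \<Rightarrow> 'h" where "tgt e = snd (orient e)"
definition route :: "'h set \<Rightarrow> 'h list" where "route e = P (src e) (tgt e)"

definition route_colours :: "'h set \<Rightarrow> nat list" where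
  "route_colours e = map (\<lambda>k. c {route e ! k, route e ! Suc k}) [0..<length (route e) - 1]"

definition covered :: "'h set set \<Rightarrow> 'h set" where
  "covered S = B \<union> (\<Union>e\<in>S. set (route e))"

definition embeds_route :: "'h set \<Rightarrow> 'v list \<Rightarrow> bool" where
  "embeds_route e Q \<longleftrightarrow> colored_walk E Q (route_colours e) \<and>
     hd Q = ph (src e) \<and> last Q = ph (tgt e) \<and> distinct Q"

text \<open>The state after the pairs in S have been embedded along the paths Qf e. The last clause
  keeps a branch vertex from receiving more children than the number of its paths embedded so far.\<close>

definition partial_embedding ::
    "'h set set \<Rightarrow> 'v set \<Rightarrow> ('v \<times> nat \<times> 'v) set \<Rightarrow> ('h set \<Rightarrow> 'v list) \<Rightarrow> bool" where
  "partial_embedding S Vs C Qf \<longleftrightarrow> extendable F Vs C \<and> Vs = F \<union> ph ` B \<union> (\<Union>e\<in>S. set (Qf e)) \<and>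
     card Vs \<le> card F + card (covered S) \<and> (\<forall>e\<in>S. embeds_route e (Qf e)) \<and>
     (\<forall>e\<in>S. set (Qf e) \<inter> (F \<union> ph ` B) = {ph (src e), ph (tgt e)}) \<and>
     (\<forall>e\<in>S. \<forall>e'\<in>S. e \<noteq> e' \<longrightarrow> set (Qf e) \<inter> set (Qf e') \<subseteq> ph ` B) \<and>
     (\<forall>a\<in>B. card (out_edges C (ph a)) \<le> card {e\<in>S. a \<in> e})"

lemma finite_B: "finite B"
  using finite_subset[OF B_VH finite_VH] .

lemma finite_branch_pairs: "finite branch_pairs"
proof -
  have "branch_pairs \<subseteq> Pow B" by (auto simp: branch_pairs_def)
  then show ?thesis using finite_B by (meson finite_Pow_iff finite_subset)
qed

lemma orient:
  assumes "e \<in> branch_pairs"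
  shows "src e \<in> B" "tgt e \<in> B" "src e \<noteq> tgt e" "e = {src e, tgt e}"
proof -
  obtain a b where "a \<in> B" "b \<in> B" "a \<noteq> b" "e = {a, b}" using assms by (auto simp: branch_pairs_def)
  then have "\<exists>ab. fst ab \<in> B \<and> snd ab \<in> B \<and> fst ab \<noteq> snd ab \<and> e = {fst ab, snd ab}"
    by (intro exI[of _ "(a, b)"]) simp
  from someI_ex[OF this] show "src e \<in> B" "tgt e \<in> B" "src e \<noteq> tgt e" "e = {src e, tgt e}"
    unfolding src_def tgt_def orient_def by blast+
qed

lemma route:
  assumes "e \<in> branch_pairs"
  shows "route e \<noteq> []" "hd (route e) = src e" "last (route e) = tgt e" "distinct (route e)"
    "length (route e) \<ge> 2 * d + 4" "(set (route e) - {src e, tgt e}) \<inter> B = {}"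
  using paths[OF orient(1-3)[OF assms]] unfolding route_def by blast+

lemma route_of_pair:
  assumes "a \<in> B" "b \<in> B" "a \<noteq> b"
  shows "{a, b} \<in> branch_pairs" "route {a, b} = P a b \<or> route {a, b} = rev (P a b)"
proof -
  show E: "{a, b} \<in> branch_pairs" using assms by (auto simp: branch_pairs_def)
  have "{a, b} = {src {a, b}, tgt {a, b}}" "src {a, b} \<noteq> tgt {a, b}" using orient[OF E] by auto
  then have "src {a, b} = a \<and> tgt {a, b} = b \<or> src {a, b} = b \<and> tgt {a, b} = a"
    by (metis doubleton_eq_iff)
  then show "route {a, b} = P a b \<or> route {a, b} = rev (P a b)"
    using paths[OF assms(2,1) assms(3)[symmetric]] by (auto simp: route_def)
qed

lemma route_colours:
  assumes "e \<in> branch_pairs"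
  shows "length (route_colours e) = length (route e) - 1" "set (route_colours e) \<subseteq> {1..t}"
proof -
  show "length (route_colours e) = length (route e) - 1" by (simp add: route_colours_def)
  show "set (route_colours e) \<subseteq> {1..t}"
    using colours[OF orient(1-3)[OF assms]] route(5)[OF assms]
    by (auto simp: route_colours_def route_def)
qed

lemma card_route_interior:
  assumes "e \<in> branch_pairs"
  shows "card (set (route e) - {src e, tgt e}) = length (route e) - 2"
proof -
  have "src e \<in> set (route e)" "tgt e \<in> set (route e)"
    using hd_in_set[OF route(1)[OF assms]] last_in_set[OF route(1)[OF assms]] route(2,3)[OF assms]
    by simp_all
  then have "card (set (route e) - {src e, tgt e}) = card (set (route e)) - 2"
    using orient(3)[OF assms] by (subst card_Diff_subset) auto
  then show ?thesis using distinct_card[OF route(4)[OF assms]] by simp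
qed

lemma route_interior_disjoint_covered:
  assumes S: "S \<subseteq> branch_pairs" and e: "e \<in> branch_pairs" "e \<notin> S"
  shows "(set (route e) - {src e, tgt e}) \<inter> covered S = {}"
proof -
  have "(set (route e) - {src e, tgt e}) \<inter> set (route e') = {}" if e': "e' \<in> S" for e'
  proof -
    have e'B: "e' \<in> branch_pairs" using S e' by blast
    have "{src e, tgt e} \<noteq> {src e', tgt e'}" using orient(4)[OF e(1)] orient(4)[OF e'B] e(2) e' by metis
    then have "(set (route e) - {src e, tgt e}) \<inter> (set (route e') - {src e', tgt e'}) = {}"
      unfolding route_def using orient[OF e(1)] orient[OF e'B] by (intro internally_disjoint) auto
    then show ?thesis using route(6)[OF e(1)] orient[OF e'B] by blast
  qed
  then show ?thesis using route(6)[OF e(1)] by (auto simp: covered_def)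
qed

lemma covered_subset_VH:
  assumes "S \<subseteq> branch_pairs"
  shows "covered S \<subseteq> VH"
proof -
  have "set (route e) \<subseteq> VH" if "e \<in> S" for e
    using that assms paths_VH[OF orient(1-3)] unfolding route_def by blast
  then show ?thesis using B_VH by (auto simp: covered_def)
qed

lemma card_covered_insert:
  assumes S: "S \<subseteq> branch_pairs" and e: "e \<in> branch_pairs" "e \<notin> S"
  shows "card (covered (insert e S)) = card (covered S) + (length (route e) - 2)"
proof -
  have "src e \<in> B" "tgt e \<in> B" using orient[OF e(1)] by auto
  then have "covered (insert e S) = covered S \<union> (set (route e) - {src e, tgt e})"
    by (auto simp: covered_def)
  moreover have "finite (covered S)"
    using covered_subset_VH[OF S] finite_VH finite_subset by blast
  ultimately show ?thesis
    using route_interior_disjoint_covered[OF S e] card_route_interior[OF e(1)]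
    by (simp add: card_Un_disjoint Int_commute)
qed

lemma card_incident_pairs:
  assumes S: "S \<subseteq> branch_pairs" and e: "e \<in> branch_pairs" "e \<notin> S" and a: "a \<in> e"
  shows "card {e' \<in> S. a \<in> e'} \<le> D - 2"
proof -
  obtain b where ab: "a \<in> B" "b \<in> B" "a \<noteq> b" "e = {a, b}"
    using e(1) a by (auto simp: branch_pairs_def)
  have "{e' \<in> S. a \<in> e'} \<subseteq> (\<lambda>b'. {a, b'}) ` (B - {a, b})"
  proof
    fix e' assume "e' \<in> {e' \<in> S. a \<in> e'}"
    then have e': "e' \<in> branch_pairs" "a \<in> e'" "e' \<noteq> e" using S e(2) by auto
    then obtain b' where "e' = {a, b'}" "b' \<in> B" "b' \<noteq> a" by (auto simp: branch_pairs_def)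
    moreover then have "b' \<noteq> b" using e'(3) ab(4) by auto
    ultimately show "e' \<in> (\<lambda>b'. {a, b'}) ` (B - {a, b})" by blast
  qed
  then have "card {e' \<in> S. a \<in> e'} \<le> card ((\<lambda>b'. {a, b'}) ` (B - {a, b}))"
    using finite_B by (intro card_mono) auto
  also have "\<dots> \<le> card (B - {a, b})" by (rule card_image_le) (use finite_B in auto)
  also have "\<dots> = D - 2" using ab finite_B card_B by (simp add: card_Diff_subset)
  finally show ?thesis .
qed

lemma partial_embeddingE:
  assumes "partial_embedding S Vs C Qf"
  obtains "extendable F Vs C" "Vs = F \<union> ph ` B \<union> (\<Union>e\<in>S. set (Qf e))"
    "card Vs \<le> card F + card (covered S)" "\<forall>e\<in>S. embeds_route e (Qf e)"
    "\<forall>e\<in>S. set (Qf e) \<inter> (F \<union> ph ` B) = {ph (src e), ph (tgt e)}"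
    "\<forall>e\<in>S. \<forall>e'\<in>S. e \<noteq> e' \<longrightarrow> set (Qf e) \<inter> set (Qf e') \<subseteq> ph ` B"
    "\<forall>a\<in>B. card (out_edges C (ph a)) \<le> card {e\<in>S. a \<in> e}"
  using assms unfolding partial_embedding_def by (elim conjE) (rule that)

lemma partial_embedding_empty: "partial_embedding {} (F \<union> ph ` B) {} Qf"
proof -
  have "card (F \<union> ph ` B) \<le> card F + card B"
    using card_Un_le[of F "ph ` B"] card_image_le[OF finite_B, of ph] by linarith
  then show ?thesis using initial by (simp add: partial_embedding_def covered_def out_edges_def)
qed

text \<open>An endpoint of a pair that is not yet embedded lies on at most D - 2 embedded routes, so
  by the last clause of the invariant it has at most D - 2 children of each colour.\<close>

lemma endpoint_demand:
  assumes inv: "partial_embedding S Vs C Qf" and S: "S \<subseteq> branch_pairs"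
    and e: "e \<in> branch_pairs" "e \<notin> S" and a: "a \<in> e"
  shows "demand F C (ph a, j) \<ge> 1"
proof -
  obtain ext: "extendable F Vs C" and out: "\<forall>a\<in>B. card (out_edges C (ph a)) \<le> card {e\<in>S. a \<in> e}"
    by (rule partial_embeddingE[OF inv]) (rule that)
  have "a = src e \<or> a = tgt e" using a orient(4)[OF e(1)] by blast
  then have a': "a \<in> B" "ph a \<notin> F" using orient(1,2)[OF e(1)] ph_V by auto
  have "card (children C (ph a) j) \<le> card {e' \<in> S. a \<in> e'}"
    using extendable_card_children_le[OF ext, of "ph a" j] out a'(1) le_trans by blast
  also have "\<dots> \<le> D - 2" by (rule card_incident_pairs[OF S e a])
  finally show ?thesis using a'(2) D_ge_3 by (simp add: demand_def)
qed

lemma out_edges_bound_insert: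
  assumes ext: "extendable F Vs C" and out: "\<forall>a\<in>B. card (out_edges C (ph a)) \<le> card {e\<in>S. a \<in> e}"
    and S: "S \<subseteq> branch_pairs" and e: "e \<in> branch_pairs" "e \<notin> S" and base: "ph ` B \<subseteq> Vs"
    and new: "{(u, j, y). (u, j, y) \<in> C' \<and> u \<in> Vs} \<subseteq> insert (ph (src e), j0, z) (insert (ph (tgt e), j1, z') C)"
  shows "\<forall>a\<in>B. card (out_edges C' (ph a)) \<le> card {e'\<in>insert e S. a \<in> e'}"
proof
  fix a assume a: "a \<in> B"
  have ab: "src e \<in> B" "tgt e \<in> B" "src e \<noteq> tgt e" "e = {src e, tgt e}" using orient[OF e(1)] by auto
  then have "ph (src e) \<noteq> ph (tgt e)" using inj_onD[OF ph_inj] by blast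
  moreover have "{(u, j, y). (u, j, y) \<in> C' \<and> u = ph a} \<subseteq> {(u, j, y). (u, j, y) \<in> C' \<and> u \<in> Vs}"
    using a base by auto
  then have "{(u, j, y). (u, j, y) \<in> C' \<and> u = ph a} \<subseteq> insert (ph (src e), j0, z) (insert (ph (tgt e), j1, z') C)"
    using new by (rule subset_trans)
  ultimately have "card (out_edges C' (ph a)) \<le>
      card (out_edges C (ph a)) + (if ph a = ph (src e) \<or> ph a = ph (tgt e) then 1 else 0)"
    by (rule card_out_edges_le[OF extendable_finite_out_edges[OF ext]])
  moreover have "(ph a = ph (src e) \<or> ph a = ph (tgt e)) \<longleftrightarrow> a \<in> e"
    using inj_on_eq_iff[OF ph_inj a ab(1)] inj_on_eq_iff[OF ph_inj a ab(2)] ab(4) by blast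
  moreover have "card {e'\<in>insert e S. a \<in> e'} = card {e'\<in>S. a \<in> e'} + (if a \<in> e then 1 else 0)"
  proof (cases "a \<in> e")
    case True
    then have "{e'\<in>insert e S. a \<in> e'} = insert e {e'\<in>S. a \<in> e'}" by blast
    then show ?thesis using True e(2) finite_subset[OF S finite_branch_pairs] by simp
  next
    case False
    then have "{e'\<in>insert e S. a \<in> e'} = {e'\<in>S. a \<in> e'}" by blast
    then show ?thesis using False by simp
  qed
  moreover have "card (out_edges C (ph a)) \<le> card {e'\<in>S. a \<in> e'}" using out a by blast
  ultimately show "card (out_edges C' (ph a)) \<le> card {e'\<in>insert e S. a \<in> e'}"
    by (simp split: if_splits)
qed

lemma partial_embedding_insert:
  assumes inv: "partial_embedding S Vs C Qf" and S: "S \<subseteq> branch_pairs"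
    and e: "e \<in> branch_pairs" "e \<notin> S"
  obtains Vs' C' Qf' where "partial_embedding (insert e S) Vs' C' Qf'"
proof -
  obtain ext: "extendable F Vs C" and Vs: "Vs = F \<union> ph ` B \<union> (\<Union>e\<in>S. set (Qf e))"
    and card_Vs: "card Vs \<le> card F + card (covered S)"
    and routes: "\<forall>e\<in>S. embeds_route e (Qf e)"
    and ends: "\<forall>e\<in>S. set (Qf e) \<inter> (F \<union> ph ` B) = {ph (src e), ph (tgt e)}"
    and disj: "\<forall>e\<in>S. \<forall>e'\<in>S. e \<noteq> e' \<longrightarrow> set (Qf e) \<inter> set (Qf e') \<subseteq> ph ` B"
    and out: "\<forall>a\<in>B. card (out_edges C (ph a)) \<le> card {e\<in>S. a \<in> e}"
    by (rule partial_embeddingE[OF inv])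
  let ?a = "src e" and ?b = "tgt e" and ?cs = "route_colours e"
  have ab: "?a \<in> B" "?b \<in> B" "?a \<noteq> ?b" "e = {?a, ?b}" using orient[OF e(1)] by auto
  have x0: "ph ?a \<in> Vs" "ph ?b \<in> Vs" "ph ?a \<noteq> ph ?b"
    using ab Vs ph_inj by (auto dest: inj_onD)
  have len: "length ?cs = length (route e) - 1" "2 * d + 3 \<le> length ?cs"
    using route_colours(1)[OF e(1)] route(5)[OF e(1)] by auto
  have "demand F C (ph a', j) \<ge> 1" if "a' \<in> e" for a' j
    by (rule endpoint_demand[OF inv S e that])
  then have dem: "demand F C (ph ?a, hd ?cs) \<ge> 1" "demand F C (ph ?b, last ?cs) \<ge> 1"
    using ab(4) by auto
  have "card (covered (insert e S)) \<le> card VH"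
    using S e finite_VH covered_subset_VH[of "insert e S"] by (intro card_mono) auto
  then have "card Vs + (length ?cs - 1) + 2 * tree_size d + (2 * D - 1) * s \<le> card V"
    using card_Vs card_covered_insert[OF S e] budget card_F len(1) by linarith
  then obtain Q C' z z' where Q: "colored_walk E Q ?cs" "hd Q = ph ?a" "last Q = ph ?b" "distinct Q"
      "set Q \<inter> Vs = {ph ?a, ph ?b}"
    and ext': "extendable F (Vs \<union> set Q) C'"
    and new: "{(u, j, y). (u, j, y) \<in> C' \<and> u \<in> Vs} \<subseteq> insert (ph ?a, hd ?cs, z) (insert (ph ?b, last ?cs, z') C)"
    by (rule extendable_connect[OF ext x0 route_colours(2)[OF e(1)] len(2) branching dem]) (rule that)
  define Qf' where "Qf' = Qf(e := Q)"
  have Qf': "Qf' e = Q" "\<And>e'. e' \<in> S \<Longrightarrow> Qf' e' = Qf e'" using e(2) by (auto simp: Qf'_def)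
  have base: "F \<union> ph ` B \<subseteq> Vs" using Vs by blast
  have "length Q = length (route e)" using Q(1) len(1) route(1)[OF e(1)] by (simp add: colored_walk_def)
  then have "card (Vs \<union> set Q) = card Vs + (length (route e) - 2)"
    using card_Un_path[OF extendable_finite[OF ext] Q(4,5) x0(3)] by simp
  then have I_card: "card (Vs \<union> set Q) \<le> card F + card (covered (insert e S))"
    using card_Vs card_covered_insert[OF S e] by linarith
  have I_Vs: "Vs \<union> set Q = F \<union> ph ` B \<union> (\<Union>e'\<in>insert e S. set (Qf' e'))"
    using Vs Qf' by auto
  have I_routes: "\<forall>e'\<in>insert e S. embeds_route e' (Qf' e')"
    using routes Q(1-4) Qf' by (simp add: embeds_route_def)
  have I_ends: "\<forall>e'\<in>insert e S. set (Qf' e') \<inter> (F \<union> ph ` B) = {ph (src e'), ph (tgt e')}"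
    using ends Q(5) base x0(1,2) ab(1,2) Qf' by auto
  have I_disj: "\<forall>e1\<in>insert e S. \<forall>e2\<in>insert e S. e1 \<noteq> e2 \<longrightarrow> set (Qf' e1) \<inter> set (Qf' e2) \<subseteq> ph ` B"
    using disj Q(5) Vs ab(1,2) Qf' by auto
  have I_out: "\<forall>a'\<in>B. card (out_edges C' (ph a')) \<le> card {e'\<in>insert e S. a' \<in> e'}"
    using base by (intro out_edges_bound_insert[OF ext out S e _ new]) blast
  have "partial_embedding (insert e S) (Vs \<union> set Q) C' Qf'"
    unfolding partial_embedding_def by (intro conjI ext' I_Vs I_card I_routes I_ends I_disj I_out)
  then show ?thesis by (rule that)
qed

lemma exists_partial_embedding:
  obtains Vs C Qf where "partial_embedding branch_pairs Vs C Qf"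
proof -
  have "\<exists>Vs C Qf. partial_embedding S Vs C Qf" if "finite S" "S \<subseteq> branch_pairs" for S
    using that
  proof (induction S rule: finite_induct)
    case empty
    show ?case by (intro exI) (rule partial_embedding_empty)
  next
    case (insert e S)
    then obtain Vs C Qf where "partial_embedding S Vs C Qf" by auto
    moreover have "S \<subseteq> branch_pairs" "e \<in> branch_pairs" using insert.prems by auto
    ultimately obtain Vs' C' Qf' where "partial_embedding (insert e S) Vs' C' Qf'"
      using partial_embedding_insert insert.hyps(2) by metis
    then show ?case by blast
  qed
  then show ?thesis using that finite_branch_pairs by blast
qed

lemma route_nth_unique:
  assumes e: "e \<in> branch_pairs" "e' \<in> branch_pairs" and k: "k < length (route e)" "k' < length (route e')"
    and eq: "route e ! k = route e' ! k'" and notB: "route e ! k \<notin> B"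
  shows "e = e' \<and> k = k'"
proof -
  have "route e ! k \<in> set (route e) - {src e, tgt e}" "route e ! k \<in> set (route e') - {src e', tgt e'}"
    using k eq notB orient(1,2)[OF e(1)] orient(1,2)[OF e(2)] nth_mem[OF k(1)] nth_mem[OF k(2)] by auto
  moreover have "(set (route e) - {src e, tgt e}) \<inter> (set (route e') - {src e', tgt e'}) = {}" if "e \<noteq> e'"
  proof -
    have "{src e, tgt e} \<noteq> {src e', tgt e'}" using that orient(4)[OF e(1)] orient(4)[OF e(2)] by metis
    then show ?thesis unfolding route_def using orient[OF e(1)] orient[OF e(2)] by (intro internally_disjoint) auto
  qed
  ultimately have "e = e'" by blast
  then show ?thesis using k eq route(4)[OF e(1)] by (simp add: nth_eq_iff_index_eq)
qed

lemma route_nth_branch: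
  assumes e: "e \<in> branch_pairs" and k: "k < length (route e)" and B: "route e ! k \<in> B"
  shows "k = 0 \<and> route e ! k = src e \<or> k = length (route e) - 1 \<and> route e ! k = tgt e"
proof -
  have "route e ! k = src e \<or> route e ! k = tgt e" using route(6)[OF e] nth_mem[OF k] B by blast
  moreover have "route e ! 0 = src e" "route e ! (length (route e) - 1) = tgt e"
    using route(1-3)[OF e] by (simp_all add: hd_conv_nth last_conv_nth)
  ultimately show ?thesis using route(1,4)[OF e] k by (metis diff_less length_greater_0_conv nth_eq_iff_index_eq zero_less_one)
qed

lemma vertex_on_route:
  assumes VH: "VH = B \<union> (\<Union>a\<in>B. \<Union>b\<in>B - {a}. set (P a b))" and h: "h \<in> VH" "h \<notin> B"
  shows "\<exists>e\<in>branch_pairs. \<exists>k<length (route e). route e ! k = h"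
proof -
  obtain a b where ab: "a \<in> B" "b \<in> B" "a \<noteq> b" "h \<in> set (P a b)" using h VH by auto
  then have "h \<in> set (route {a, b})" using route_of_pair[OF ab(1-3)] by auto
  then show ?thesis using route_of_pair(1)[OF ab(1-3)] by (metis in_set_conv_nth)
qed

definition embedding_map :: "('h set \<Rightarrow> 'v list) \<Rightarrow> 'h \<Rightarrow> 'v" where
  "embedding_map Qf h = (if h \<in> B then ph h
     else (SOME v. \<exists>e\<in>branch_pairs. \<exists>k<length (route e). route e ! k = h \<and> v = Qf e ! k))"

context
  fixes Vs C Qf assumes final: "partial_embedding branch_pairs Vs C Qf"
begin

lemma embedded_route:
  assumes e: "e \<in> branch_pairs"
  shows "length (Qf e) = length (route e)" "Qf e ! 0 = ph (src e)"
    "Qf e ! (length (route e) - 1) = ph (tgt e)" "distinct (Qf e)" "set (Qf e) \<subseteq> V"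
    "set (Qf e) \<inter> ph ` B = {ph (src e), ph (tgt e)}"
    "Suc k < length (route e) \<Longrightarrow> {Qf e ! k, Qf e ! Suc k} \<in> E (c {route e ! k, route e ! Suc k})"
proof -
  obtain ext: "extendable F Vs C" and Vs: "Vs = F \<union> ph ` B \<union> (\<Union>e\<in>branch_pairs. set (Qf e))"
    and routes: "\<forall>e\<in>branch_pairs. embeds_route e (Qf e)"
    and ends_all: "\<forall>e\<in>branch_pairs. set (Qf e) \<inter> (F \<union> ph ` B) = {ph (src e), ph (tgt e)}"
    by (rule partial_embeddingE[OF final])
  have emb: "embeds_route e (Qf e)" and ends: "set (Qf e) \<inter> (F \<union> ph ` B) = {ph (src e), ph (tgt e)}"
    using routes ends_all e by blast+
  have walk: "colored_walk E (Qf e) (route_colours e)" and hd: "hd (Qf e) = ph (src e)"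
    and last: "last (Qf e) = ph (tgt e)" and "distinct (Qf e)"
    using emb by (simp_all add: embeds_route_def)
  then show len: "length (Qf e) = length (route e)" and "distinct (Qf e)"
    using route(1)[OF e] by (simp_all add: colored_walk_def route_colours_def)
  then have "Qf e \<noteq> []" using route(1)[OF e] by auto
  then show "Qf e ! 0 = ph (src e)" "Qf e ! (length (route e) - 1) = ph (tgt e)"
    using hd last len by (simp_all add: hd_conv_nth last_conv_nth)
  show "set (Qf e) \<subseteq> V" using extendable_subset_V[OF ext] Vs e by blast
  show "set (Qf e) \<inter> ph ` B = {ph (src e), ph (tgt e)}"
    using ends ph_V orient(1,2)[OF e] by blast
  show "Suc k < length (route e) \<Longrightarrow> {Qf e ! k, Qf e ! Suc k} \<in> E (c {route e ! k, route e ! Suc k})"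
    using walk by (simp add: colored_walk_def route_colours_def)
qed

lemma embedding_map_route:
  assumes e: "e \<in> branch_pairs" and k: "k < length (route e)"
  shows "embedding_map Qf (route e ! k) = Qf e ! k"
proof (cases "route e ! k \<in> B")
  case True
  then show ?thesis using route_nth_branch[OF e k] embedded_route(2,3)[OF e]
    by (auto simp: embedding_map_def)
next
  case False
  have "(SOME v. \<exists>e'\<in>branch_pairs. \<exists>k'<length (route e'). route e' ! k' = route e ! k \<and> v = Qf e' ! k')
      = Qf e ! k"
  proof (rule some_equality)
    show "\<exists>e'\<in>branch_pairs. \<exists>k'<length (route e'). route e' ! k' = route e ! k \<and> Qf e ! k = Qf e' ! k'"
      using e k by blast
  next
    fix v assume "\<exists>e'\<in>branch_pairs. \<exists>k'<length (route e'). route e' ! k' = route e ! k \<and> v = Qf e' ! k'"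
    then show "v = Qf e ! k" using route_nth_unique[OF e _ k] False by metis
  qed
  then show ?thesis using False by (simp add: embedding_map_def)
qed

lemma embedded_interior_not_branch:
  assumes e: "e \<in> branch_pairs" and k: "k < length (route e)" and notB: "route e ! k \<notin> B"
  shows "Qf e ! k \<notin> ph ` B"
proof
  assume "Qf e ! k \<in> ph ` B"
  moreover have "Qf e ! k \<in> set (Qf e)" using k embedded_route(1)[OF e] by simp
  ultimately have "Qf e ! k \<in> {ph (src e), ph (tgt e)}" using embedded_route(6)[OF e] by blast
  then have "Qf e ! k = Qf e ! 0 \<or> Qf e ! k = Qf e ! (length (route e) - 1)"
    using embedded_route(2,3)[OF e] by auto
  then have "k = 0 \<or> k = length (route e) - 1"
    using embedded_route(1,4)[OF e] k route(1)[OF e] nth_eq_iff_index_eq[of "Qf e" k 0]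
      nth_eq_iff_index_eq[of "Qf e" k "length (route e) - 1"] by auto
  then show False using notB route(1-3)[OF e] orient(1,2)[OF e] by (auto simp: hd_conv_nth last_conv_nth)
qed

lemma embedded_routes_meet_in_branch:
  assumes "e \<in> branch_pairs" "e' \<in> branch_pairs" "e \<noteq> e'"
  shows "set (Qf e) \<inter> set (Qf e') \<subseteq> ph ` B"
proof -
  obtain "\<forall>e\<in>branch_pairs. \<forall>e'\<in>branch_pairs. e \<noteq> e' \<longrightarrow> set (Qf e) \<inter> set (Qf e') \<subseteq> ph ` B"
    by (rule partial_embeddingE[OF final])
  then show ?thesis using assms by blast
qed

text \<open>Branch vertices go to ph ` B and interior vertices of routes avoid it; two interior vertices
  with the same image lie on the same route, since different routes meet only in ph ` B.\<close>

lemma inj_on_embedding_map: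
  assumes VH: "VH = B \<union> (\<Union>a\<in>B. \<Union>b\<in>B - {a}. set (P a b))"
  shows "inj_on (embedding_map Qf) VH"
proof (rule inj_onI)
  fix h1 h2 assume h: "h1 \<in> VH" "h2 \<in> VH" "embedding_map Qf h1 = embedding_map Qf h2"
  consider "h1 \<in> B" "h2 \<in> B" | "h1 \<notin> B" "h2 \<in> B" | "h1 \<in> B" "h2 \<notin> B" | "h1 \<notin> B" "h2 \<notin> B"
    by blast
  then show "h1 = h2"
  proof cases
    case 1 then show ?thesis using h(3) inj_onD[OF ph_inj] by (simp add: embedding_map_def)
  next
    case 2
    then obtain e k where "e \<in> branch_pairs" "k < length (route e)" "route e ! k = h1"
      using vertex_on_route[OF VH h(1)] by blast
    then show ?thesis using 2 h(3) embedding_map_route embedded_interior_not_branch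
      by (force simp: embedding_map_def)
  next
    case 3
    then obtain e k where "e \<in> branch_pairs" "k < length (route e)" "route e ! k = h2"
      using vertex_on_route[OF VH h(2)] by blast
    then show ?thesis using 3 h(3) embedding_map_route embedded_interior_not_branch
      by (force simp: embedding_map_def)
  next
    case 4
    then obtain e k e' k' where ek: "e \<in> branch_pairs" "k < length (route e)" "route e ! k = h1"
      "e' \<in> branch_pairs" "k' < length (route e')" "route e' ! k' = h2"
      using vertex_on_route[OF VH h(1)] vertex_on_route[OF VH h(2)] by metis
    then have eq: "Qf e ! k = Qf e' ! k'" using h(3) embedding_map_route by metis
    have "Qf e ! k \<in> set (Qf e)" "Qf e ! k \<in> set (Qf e')"
      using ek eq embedded_route(1) by (metis nth_mem)+
    then have "e = e'"
      using embedded_routes_meet_in_branch[OF ek(1,4)] embedded_interior_not_branch[OF ek(1,2)] ek(3) 4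
      by blast
    then show ?thesis using eq ek embedded_route(1,4) by (simp add: nth_eq_iff_index_eq)
  qed
qed

lemma embedding_map_image:
  assumes VH: "VH = B \<union> (\<Union>a\<in>B. \<Union>b\<in>B - {a}. set (P a b))"
  shows "embedding_map Qf ` VH \<subseteq> V"
proof
  fix v assume "v \<in> embedding_map Qf ` VH"
  then obtain h where h: "h \<in> VH" "v = embedding_map Qf h" by blast
  show "v \<in> V"
  proof (cases "h \<in> B")
    case True then show ?thesis using h ph_V by (auto simp: embedding_map_def)
  next
    case False
    then obtain e k where e: "e \<in> branch_pairs" "k < length (route e)" "route e ! k = h"
      using vertex_on_route[OF VH h(1)] by blast
    then have "v \<in> set (Qf e)" using h(2) embedding_map_route[OF e(1,2)] embedded_route(1)[OF e(1)] by auto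
    then show ?thesis using embedded_route(5)[OF e(1)] by blast
  qed
qed

lemma embedding_map_edges:
  assumes EH: "EH = (\<Union>a\<in>B. \<Union>b\<in>B - {a}. path_edges (P a b))" and eh: "eh \<in> EH"
  shows "embedding_map Qf ` eh \<in> E (c eh)"
proof -
  obtain a b k where ab: "a \<in> B" "b \<in> B" "a \<noteq> b" and k: "Suc k < length (P a b)"
    and eh_eq: "eh = {P a b ! k, P a b ! Suc k}"
    using eh EH by (auto simp: path_edges_def)
  note e = route_of_pair(1)[OF ab]
  obtain i where i: "Suc i < length (route {a, b})" "eh = {route {a, b} ! i, route {a, b} ! Suc i}"
  proof (cases "route {a, b} = P a b")
    case True then show ?thesis using that[of k] k eh_eq by simp
  next
    case False
    then have rev: "route {a, b} = rev (P a b)" using route_of_pair(2)[OF ab] by blast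
    define i where "i = length (P a b) - 2 - k"
    have "Suc i < length (route {a, b})" "route {a, b} ! i = P a b ! Suc k"
      "route {a, b} ! Suc i = P a b ! k"
      using k by (auto simp: rev rev_nth i_def Suc_diff_Suc numeral_2_eq_2)
    then show ?thesis using that eh_eq by (metis insert_commute)
  qed
  then have "embedding_map Qf ` eh = {Qf {a, b} ! i, Qf {a, b} ! Suc i}"
    using embedding_map_route[OF e] by simp
  then show ?thesis using embedded_route(7)[OF e i(1)] i(2) by simp
qed

end

lemma subdivision_embeds:
  assumes "VH = B \<union> (\<Union>a\<in>B. \<Union>b\<in>B - {a}. set (P a b))"
    and "EH = (\<Union>a\<in>B. \<Union>b\<in>B - {a}. path_edges (P a b))"
  shows "\<exists>\<phi>. inj_on \<phi> VH \<and> \<phi> ` VH \<subseteq> V \<and> (\<forall>e\<in>EH. \<phi> ` e \<in> E (c e))"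
proof -
  obtain Vs C Qf where final: "partial_embedding branch_pairs Vs C Qf"
    by (rule exists_partial_embedding)
  show ?thesis
    using inj_on_embedding_map[OF final assms(1)] embedding_map_image[OF final assms(1)]
      embedding_map_edges[OF final assms(2)] by blast
qed

end

context joined_family
begin

lemma exists_initial_state:
  assumes big: "card V \<ge> (4 * D + 1) * s + D" and B: "finite B" "card B = D"
  obtains F ph where "card F < s" "inj_on ph B" "ph ` B \<subseteq> V - F" "extendable F (F \<union> ph ` B) {}"
proof -
  obtain F where F: "F \<subseteq> V" "card F < s" and expands: "\<And>U. U \<subseteq> (V - F) \<times> {1..t} \<Longrightarrow>
      U \<noteq> {} \<Longrightarrow> card U < s \<Longrightarrow> (2 * D - 1) * card U < card (nbrs U - F)"
    using exists_forbidden_set[OF big] by blast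
  have "card V \<le> card (V - F) + card F"
    using F(1) finite_V finite_subset by (intro card_le_card_Diff_plus) auto
  then have "D \<le> card (V - F)" using big F(2) by (simp add: algebra_simps)
  then obtain A where A: "A \<subseteq> V - F" "card A = D" by (meson obtain_subset_with_card_n)
  then have "finite A" using finite_V finite_subset by blast
  then obtain ph where ph: "bij_betw ph B A" using finite_same_card_bij B A(2) by metis
  then have "extendable F (F \<union> ph ` B) {}"
    using extendable_initial[OF big F expands A(1)] A(2) by (simp add: bij_betw_def)
  then show ?thesis using that F(2) ph A(1) by (auto simp: bij_betw_def)
qed

lemma budget_bound:
  assumes "d = 0 \<or> (D - 1) ^ (d - 1) < s"
  shows "(s - 1) + 2 * tree_size d + (2 * D - 1) * s \<le> 6 * s * D"
proof -
  obtain s' D' where "s = s' + 1" "D = D' + 3"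
    using s_pos D_ge_3 by (metis add.commute le_add_diff_inverse)
  then have "(s - 1) + 2 * ((D + 1) * (s - 1)) + (2 * D - 1) * s \<le> 6 * s * D"
    by (simp add: algebra_simps)
  then show ?thesis using tree_size_le[OF assms] by linarith
qed

lemma family_contains_subdivision:
  assumes col: "edge_colored_graph t VH EH c" and sub: "subdivision_KD D (2 * d + 3) VH EH"
    and d: "s \<le> (D - 1) ^ d" "d = 0 \<or> (D - 1) ^ (d - 1) < s"
    and size: "card VH + 6 * s * D \<le> card V"
  shows "family_contains V E VH EH c"
proof -
  obtain B P where B: "B \<subseteq> VH" "card B = D"
    and paths: "\<forall>a\<in>B. \<forall>b\<in>B. a \<noteq> b \<longrightarrow> P b a = rev (P a b) \<and> P a b \<noteq> [] \<and>
      hd (P a b) = a \<and> last (P a b) = b \<and> distinct (P a b) \<and> length (P a b) \<ge> 2 * d + 3 + 1 \<and>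
      (set (P a b) - {a, b}) \<inter> B = {}"
    and disj: "\<forall>a\<in>B. \<forall>b\<in>B. \<forall>a'\<in>B. \<forall>b'\<in>B. a \<noteq> b \<and> a' \<noteq> b' \<and> {a, b} \<noteq> {a', b'} \<longrightarrow>
      (set (P a b) - {a, b}) \<inter> (set (P a' b') - {a', b'}) = {}"
    and VH: "VH = B \<union> (\<Union>a\<in>B. \<Union>b\<in>B - {a}. set (P a b))"
    and EH: "EH = (\<Union>a\<in>B. \<Union>b\<in>B - {a}. path_edges (P a b))"
    using sub unfolding subdivision_KD_def by blast
  have fin_VH: "finite VH" and colours: "\<forall>e\<in>EH. c e \<in> {1..t}"
    using col by (auto simp: edge_colored_graph_def)
  have "D \<le> card VH" using card_mono[OF fin_VH B(1)] B(2) by simp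
  moreover have "(4 * D + 1) * s \<le> 6 * s * D" using D_ge_3 by (simp add: algebra_simps)
  ultimately have "card V \<ge> (4 * D + 1) * s + D" using size by linarith
  then obtain F ph where F: "card F < s" "inj_on ph B" "ph ` B \<subseteq> V - F" "extendable F (F \<union> ph ` B) {}"
    using exists_initial_state B(2) finite_subset[OF B(1) fin_VH] by metis
  have budget: "card VH + (s - 1) + 2 * tree_size d + (2 * D - 1) * s \<le> card V"
    using budget_bound[OF d(2)] size by linarith
  interpret subdivision_embedding V t E s D F VH B P c ph d
  proof unfold_locales
    fix a b k assume ab: "a \<in> B" "b \<in> B" "a \<noteq> b"
    show "P b a = rev (P a b) \<and> P a b \<noteq> [] \<and> hd (P a b) = a \<and> last (P a b) = b \<and>
      distinct (P a b) \<and> length (P a b) \<ge> 2 * d + 4 \<and> (set (P a b) - {a, b}) \<inter> B = {}"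
      using paths[rule_format, OF ab] by simp
    show "set (P a b) \<subseteq> VH" using VH ab by blast
    assume "Suc k < length (P a b)"
    then have "{P a b ! k, P a b ! Suc k} \<in> EH" using EH ab by (auto simp: path_edges_def)
    then show "c {P a b ! k, P a b ! Suc k} \<in> {1..t}" using colours by blast
  next
    fix a b a' b' assume "a \<in> B" "b \<in> B" "a' \<in> B" "b' \<in> B" "a \<noteq> b" "a' \<noteq> b'" "{a, b} \<noteq> {a', b'}"
    then show "(set (P a b) - {a, b}) \<inter> (set (P a' b') - {a', b'}) = {}"
      using disj[rule_format, of a b a' b'] by blast
  qed (fact F fin_VH B d(1) budget)+
  show ?thesis using subdivision_embeds[OF VH EH] unfolding family_contains_def .
qed

end

lemma power_ceiling_log_bounds:
  fixes s b d :: nat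
  assumes s: "s \<ge> 1" and b: "b \<ge> 2" and d: "d = nat \<lceil>ln (real s) / ln (real b)\<rceil>"
  shows "s \<le> b ^ d" and "d \<ge> 1 \<Longrightarrow> b ^ (d - 1) < s"
proof -
  define q where "q = ln (real s) / ln (real b)"
  have lnb: "ln (real b) > 0" using b by simp
  have "q \<ge> 0" using s lnb by (simp add: q_def)
  then have dq: "real d = of_int \<lceil>q\<rceil>" using d by (simp add: q_def)
  have "q \<le> real d" using dq by (simp add: le_of_int_ceiling)
  then have "ln (real s) \<le> real d * ln (real b)" using lnb by (simp add: q_def divide_le_eq)
  also have "\<dots> = ln (real b ^ d)" using b by (simp add: ln_realpow)
  finally show "s \<le> b ^ d" using s b by (subst (asm) ln_le_cancel_iff) (auto simp flip: of_nat_power)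
  assume "d \<ge> 1"
  then have "real (d - 1) < q" using dq ceiling_correct[of q] by (simp add: of_nat_diff)
  then have "ln (real b ^ (d - 1)) < ln (real s)"
    using lnb b by (simp add: q_def pos_less_divide_eq ln_realpow)
  then show "b ^ (d - 1) < s" using s b by (subst (asm) ln_less_cancel_iff) (auto simp flip: of_nat_power)
qed

theorem theorem1p4:
  fixes s t D :: nat and V :: "'v set" and E :: "nat \<Rightarrow> 'v set set"
    and VH :: "'h set" and EH :: "'h set set" and c :: "'h set \<Rightarrow> nat"
  assumes "s \<ge> 1" "t \<ge> 1" "D \<ge> 3"
    and "graph_family V t E" and "s_joined s V t E"
    and "edge_colored_graph t VH EH c"
    and "subdivision_KD D (2 * nat \<lceil>ln (real s) / ln (real D - 1)\<rceil> + 3) VH EH"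
    and "max_mon_degree_le t VH EH c D"
    and "int (card VH) \<le> int (card V) - 6 * int s * int D"
  shows "family_contains V E VH EH c"
proof -
  interpret joined_family V t E s D
    using assms by unfold_locales
  define d where "d = nat \<lceil>ln (real s) / ln (real (D - 1))\<rceil>"
  have "real (D - 1) = real D - 1" using assms(3) by simp
  then have sub: "subdivision_KD D (2 * d + 3) VH EH" using assms(7) by (simp add: d_def)
  have "D - 1 \<ge> 2" using assms(3) by simp
  then have power: "s \<le> (D - 1) ^ d" "d \<ge> 1 \<Longrightarrow> (D - 1) ^ (d - 1) < s"
    using power_ceiling_log_bounds[OF assms(1) _ d_def] by blast+
  then have "d = 0 \<or> (D - 1) ^ (d - 1) < s" by (cases d) auto
  moreover have "int (6 * s * D) = 6 * int s * int D" by simp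
  with assms(9) have "card VH + 6 * s * D \<le> card V" by linarith
  ultimately show ?thesis using family_contains_subdivision[OF assms(6) sub power(1)] by blast
qed

end
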